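(* Let $n\ge3$. Then $Inn_l(Q_n)$ $(=Inn_r(Q_n))$ is an elementary abelian $2$-group of order $2^{2^{n-1}-1}$.
   Context: Cayley--Dickson loops: $Q_0=\{1,-1\}\subset\mathbb{R}$ with conjugation $x^*=x$. For $n\ge1$, $Q_n=\{(x,0),(x,1)\mid x\in Q_{n-1}\}$ with multiplication $(x,0)(y,0)=(xy,0)$, $(x,0)(y,1)=(yx,1)$, $(x,1)(y,0)=(xy^*,1)$, $(x,1)(y,1)=(-y^*x,0)$ and conjugation $(x,0)^*=(x^*,0)$, $(x,1)^*=(-x,1)$, where $-(x,a)=(-x,a)$. $Q_n$ is a loop with neutral element $1=(1,0,\dots,0)$. For a loop $Q$: $L_x(a)=xa$, $Mlt_l(Q)=\langle L_x\mid x\in Q\rangle$ and $Inn_l(Q)=\{f\in Mlt_l(Q)\mid f(1)=1\}$; analogously $Inn_r(Q)$ with right translations $R_x(a)=ax$. *)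

theory Defs
  imports "HOL-Algebra.Bij" "HOL-Algebra.Generated_Groups"
begin

text \<open>Cayley--Dickson elements: CR r is a real number of Q_0 (r = 1 or -1),
  CP x a is the pair (x,a) with a = False meaning 0 and a = True meaning 1.\<close>
datatype cd = CR int | CP cd bool

fun cd_neg :: "cd \<Rightarrow> cd" where
  "cd_neg (CR r) = CR (- r)"
| "cd_neg (CP x a) = CP (cd_neg x) a"

fun cd_conj :: "cd \<Rightarrow> cd" where
  "cd_conj (CR r) = CR r"
| "cd_conj (CP x False) = CP (cd_conj x) False"
| "cd_conj (CP x True) = CP (cd_neg x) True"

lemma size_cd_neg[simp]: "size (cd_neg x) = size x"
  by (induction x) auto

lemma size_cd_conj[simp]: "size (cd_conj x) = size x"
  by (induction x rule: cd_conj.induct) auto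

function cd_mult :: "cd \<Rightarrow> cd \<Rightarrow> cd" where
  "cd_mult (CR r) (CR s) = CR (r * s)"
| "cd_mult (CP x False) (CP y False) = CP (cd_mult x y) False"
| "cd_mult (CP x False) (CP y True) = CP (cd_mult y x) True"
| "cd_mult (CP x True) (CP y False) = CP (cd_mult x (cd_conj y)) True"
| "cd_mult (CP x True) (CP y True) = CP (cd_neg (cd_mult (cd_conj y) x)) False"
| "cd_mult (CR r) (CP y b) = CR 0"
| "cd_mult (CP x a) (CR s) = CR 0"
  by pat_completeness auto
termination
  by (relation "measure (\<lambda>(x, y). size x + size y)") auto

fun Q :: "nat \<Rightarrow> cd set" where
  "Q 0 = {CR 1, CR (-1)}"
| "Q (Suc n) = {CP x a | x a. x \<in> Q n}"

fun cd_one :: "nat \<Rightarrow> cd" where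
  "cd_one 0 = CR 1"
| "cd_one (Suc n) = CP (cd_one n) False"

definition Ltr :: "nat \<Rightarrow> cd \<Rightarrow> (cd \<Rightarrow> cd)" where
  "Ltr n x = (\<lambda>a \<in> Q n. cd_mult x a)"

definition Rtr :: "nat \<Rightarrow> cd \<Rightarrow> (cd \<Rightarrow> cd)" where
  "Rtr n x = (\<lambda>a \<in> Q n. cd_mult a x)"

definition Mlt_l :: "nat \<Rightarrow> (cd \<Rightarrow> cd) set" where
  "Mlt_l n = generate (BijGroup (Q n)) (Ltr n ` Q n)"

definition Mlt_r :: "nat \<Rightarrow> (cd \<Rightarrow> cd) set" where
  "Mlt_r n = generate (BijGroup (Q n)) (Rtr n ` Q n)"

definition Inn_l :: "nat \<Rightarrow> (cd \<Rightarrow> cd) set" where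
  "Inn_l n = {f \<in> Mlt_l n. f (cd_one n) = cd_one n}"

definition Inn_r :: "nat \<Rightarrow> (cd \<Rightarrow> cd) set" where
  "Inn_r n = {f \<in> Mlt_r n. f (cd_one n) = cd_one n}"

definition elementary_abelian_2_subgroup :: "'a set \<Rightarrow> ('a, 'b) monoid_scheme \<Rightarrow> bool" where
  "elementary_abelian_2_subgroup H G \<longleftrightarrow>
     subgroup H G \<and>
     (\<forall>f\<in>H. \<forall>g\<in>H. f \<otimes>\<^bsub>G\<^esub> g = g \<otimes>\<^bsub>G\<^esub> f) \<and>
     (\<forall>f\<in>H. f \<otimes>\<^bsub>G\<^esub> f = \<one>\<^bsub>G\<^esub>)"

end

theory Submission
  imports Defs
begin

text \<open>
  Write e_i for the basis element of Q_n indexed by a bit string i of length n, so that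
  Q_n = {e_i, -e_i}.  Multiplication satisfies e_i e_j = s(i,j) e_{i xor j} for an explicit
  sign cocycle s (msign below).  Consequently every left translation of Q_n is a twist
  x = r e_i \<mapsto> r e(i) e_{t xor i}, given by a shift t and a sign function e on bit strings.

  The proof, for n = m + 1 with m \<ge> 2, runs as follows.
  (1) Twists form a group under composition; two conditions on (t, e) relating the values
      of e on the two halves of the index set are preserved by composition and inversion
      and hold for left translations.  Hence every element of Mlt_l is an admissible twist.
  (2) An admissible twist fixing 1 has t = 0, e(0) = 1, e(1i) = c e(0i) for a constant
      sign c, and an even number of signs -1 among the e(0i).  Call these maps Diag.
  (3) Conversely every map of Diag is a product of left translations: explicit products
      realise the sign changes at two positions {0, v}, which generate the case c = 1,
      and one further product realises c = -1.  Hence Inn_l = Diag.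
  (4) Diag is an elementary abelian 2-group of order 2 * 2^(2^m - 2) = 2^(2^m - 1).
  (5) Conjugation x \<mapsto> x* is an anti-automorphism of Q_n; conjugating by it maps Mlt_l
      onto Mlt_r and fixes every map of Diag, so Inn_r = Inn_l.
\<close>

fun bxor :: "bool list \<Rightarrow> bool list \<Rightarrow> bool list" where
  "bxor (a#l) (b#m) = (a \<noteq> b) # bxor l m"
| "bxor _ _ = []"

abbreviation zeros :: "nat \<Rightarrow> bool list" where "zeros m \<equiv> replicate m False"

lemma length_bxor[simp]: "length (bxor i j) = min (length i) (length j)"
  by (induction i j rule: bxor.induct) auto

lemma bxor_comm: "bxor i j = bxor j i"
  by (induction i j rule: bxor.induct) auto

lemma bxor_assoc:
  "length a = length b \<Longrightarrow> length b = length c \<Longrightarrow> bxor (bxor a b) c = bxor a (bxor b c)"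
proof (induction a arbitrary: b c)
  case (Cons x a) then show ?case by (cases b; cases c) auto
qed simp

lemma bxor_self[simp]: "bxor i i = zeros (length i)"
  by (induction i) auto

lemma bxor_zeros_left[simp]: "bxor (zeros (length i)) i = i"
  by (induction i) auto

lemma bxor_zeros_right[simp]: "bxor i (zeros (length i)) = i"
  by (induction i) auto

lemma bxor_zeros_left'[simp]: "length i = m \<Longrightarrow> bxor (zeros m) i = i"
  by auto

lemma bxor_zeros_right'[simp]: "length i = m \<Longrightarrow> bxor i (zeros m) = i"
  by auto

lemma bxor_eq_zeros_iff: "length i = length j \<Longrightarrow> bxor i j = zeros (length i) \<longleftrightarrow> i = j"
proof (induction i arbitrary: j)
  case (Cons a i) then show ?case by (cases j) auto
qed simp

lemma bxor_cancel: "length i = length j \<Longrightarrow> bxor j (bxor j i) = i"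
  by (metis bxor_assoc bxor_self bxor_zeros_left)

lemma bxor_rotate:
  "length a = length b \<Longrightarrow> length b = length c \<Longrightarrow> bxor (bxor a b) c = bxor b (bxor c a)"
  by (metis bxor_assoc bxor_comm length_bxor min.idem)

text \<open>Signs are the integers 1 and -1; csign j is the sign by which conjugation acts on e_j.\<close>

abbreviation is_sign :: "int \<Rightarrow> bool" where "is_sign s \<equiv> s = 1 \<or> s = -1"

lemma is_sign_mult: "is_sign a \<Longrightarrow> is_sign b \<Longrightarrow> is_sign (a * b)" by auto

lemma is_sign_sq: "is_sign s \<Longrightarrow> s * s = 1" by auto

lemma is_sign_pow_even: "is_sign c \<Longrightarrow> m \<ge> 1 \<Longrightarrow> c ^ (2 ^ m) = (1::int)"
proof -
  assume "is_sign c" "m \<ge> 1"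
  then have "even ((2::nat) ^ m)" by simp
  with \<open>is_sign c\<close> show ?thesis by auto
qed

definition csign :: "bool list \<Rightarrow> int" where
  "csign j = (if True \<in> set j then -1 else 1)"

lemma csign_is_sign: "is_sign (csign j)" by (simp add: csign_def)

lemma csign_sq[simp]: "csign j * csign j = 1" by (simp add: csign_def)

lemma csign_sq_cancel[simp]: "csign i * (csign i * y) = y"
  by (metis mult.assoc mult_1 csign_sq)

lemma csign_simps[simp]: "csign (False # j) = csign j" "csign (True # j) = -1" "csign [] = 1"
  by (auto simp: csign_def)

lemma csign_zeros[simp]: "csign (zeros m) = 1" by (simp add: csign_def)

lemma csign_eq_1_iff: "csign j = 1 \<longleftrightarrow> j = zeros (length j)"
  by (induction j) (auto simp: csign_def)

text \<open>The multiplication sign: e_i e_j = msign i j * e_{i xor j} (see cd_mult_basis).\<close>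

function msign :: "bool list \<Rightarrow> bool list \<Rightarrow> int" where
  "msign (False#i) (False#j) = msign i j"
| "msign (False#i) (True#j) = msign j i"
| "msign (True#i) (False#j) = msign i j * csign j"
| "msign (True#i) (True#j) = - csign j * msign j i"
| "msign [] _ = 1"
| "msign (a#i) [] = 1"
  by pat_completeness auto
termination
  by (relation "measure (\<lambda>(i, j). length i + length j)") auto

lemma msign_is_sign: "is_sign (msign i j)"
  by (induction i j rule: msign.induct) (auto simp: csign_def)

lemma msign_sq[simp]: "msign i j * msign i j = 1"
  using msign_is_sign[of i j] by auto

lemma msign_sq_cancel[simp]: "msign i j * (msign i j * y) = y"
  by (metis mult.assoc mult_1 msign_sq)

text \<open>
  Normal form of Q_n: every element is signed s (basis l) = s e_l with s a sign and l a bit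
  string of length n; sgn_of and idx recover s and l.  The head of l is the outermost
  Cayley--Dickson coordinate.\<close>

fun basis :: "bool list \<Rightarrow> cd" where
  "basis [] = CR 1"
| "basis (a#l) = CP (basis l) a"

definition signed :: "int \<Rightarrow> cd \<Rightarrow> cd" where
  "signed s x = (if s = 1 then x else cd_neg x)"

fun sgn_of :: "cd \<Rightarrow> int" where
  "sgn_of (CR r) = r"
| "sgn_of (CP x a) = sgn_of x"

fun idx :: "cd \<Rightarrow> bool list" where
  "idx (CR r) = []"
| "idx (CP x a) = a # idx x"

lemma cd_neg_neg[simp]: "cd_neg (cd_neg x) = x"
  by (induction x) auto

lemma signed_one[simp]: "signed 1 x = x" by (simp add: signed_def)

lemma signed_signed: "is_sign s \<Longrightarrow> is_sign t \<Longrightarrow> signed s (signed t x) = signed (s * t) x"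
  by (auto simp: signed_def)

lemma signed_comm: "signed s (signed t x) = signed t (signed s x)"
  by (auto simp: signed_def)

lemma cd_neg_signed: "is_sign s \<Longrightarrow> cd_neg (signed s x) = signed (-s) x"
  by (auto simp: signed_def)

lemma CP_signed: "CP (signed s x) a = signed s (CP x a)" by (auto simp: signed_def)

lemma sgn_of_neg[simp]: "sgn_of (cd_neg x) = - sgn_of x" by (induction x) auto
lemma idx_neg[simp]: "idx (cd_neg x) = idx x" by (induction x) auto
lemma sgn_of_signed[simp]: "is_sign s \<Longrightarrow> sgn_of (signed s x) = s * sgn_of x"
  by (auto simp: signed_def)
lemma idx_signed[simp]: "idx (signed s x) = idx x" by (auto simp: signed_def)
lemma sgn_of_basis[simp]: "sgn_of (basis l) = 1" by (induction l) auto
lemma idx_basis[simp]: "idx (basis l) = l" by (induction l) auto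

lemma Q_normal_form: "Q n = {signed s (basis l) | s l. is_sign s \<and> length l = n}"
proof (induction n)
  case 0
  show ?case by (auto simp: signed_def)
next
  case (Suc n)
  have "z \<in> Q (Suc n)" if z: "is_sign s" "length l = Suc n" "z = signed s (basis l)" for z s l
  proof -
    obtain a l' where l: "l = a # l'" "length l' = n" using z(2) by (cases l) auto
    then have "signed s (basis l') \<in> Q n" using Suc z(1) by auto
    moreover have "z = CP (signed s (basis l')) a" using z(3) l by (simp add: CP_signed)
    ultimately show ?thesis by auto
  qed
  moreover have "\<exists>s l. z = signed s (basis l) \<and> is_sign s \<and> length l = Suc n"
    if z: "z \<in> Q (Suc n)" for z
  proof -
    obtain x a where "z = CP x a" "x \<in> Q n" using z by auto
    with Suc obtain s l where "x = signed s (basis l)" "is_sign s" "length l = n" by auto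
    then show ?thesis using \<open>z = CP x a\<close>
      by (auto simp: CP_signed intro!: exI[of _ s] exI[of _ "a#l"])
  qed
  ultimately show ?case by blast
qed

text \<open>The decomposition of an element into sign and index.  Its first conjunct would loop
  as a rewrite rule, so the side facts are also stated separately as Q_sign_idx.\<close>

lemma Q_decomp:
  "x \<in> Q n \<Longrightarrow> x = signed (sgn_of x) (basis (idx x)) \<and> is_sign (sgn_of x) \<and> length (idx x) = n"
  unfolding Q_normal_form by auto

lemma Q_sign_idx: "x \<in> Q n \<Longrightarrow> is_sign (sgn_of x) \<and> length (idx x) = n"
  using Q_decomp by blast

lemma signed_basis_in_Q: "is_sign s \<Longrightarrow> length l = n \<Longrightarrow> signed s (basis l) \<in> Q n"
  unfolding Q_normal_form by auto

lemma basis_in_Q: "length l = n \<Longrightarrow> basis l \<in> Q n"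
  using signed_basis_in_Q[of 1 l n] by simp

lemma cd_one_basis: "cd_one n = basis (zeros n)"
  by (induction n) auto

lemma cd_one_in_Q: "cd_one n \<in> Q n"
  unfolding cd_one_basis by (rule basis_in_Q) simp

text \<open>From here on Q n is handled through the normal form only.\<close>

declare Q.simps[simp del]

lemma cd_conj_neg[simp]: "cd_conj (cd_neg x) = cd_neg (cd_conj x)"
  by (induction x rule: cd_conj.induct) auto

lemma cd_mult_neg:
  "cd_mult (cd_neg x) y = cd_neg (cd_mult x y) \<and> cd_mult x (cd_neg y) = cd_neg (cd_mult x y)"
  by (induction x y rule: cd_mult.induct) auto

lemma cd_mult_neg_left[simp]: "cd_mult (cd_neg x) y = cd_neg (cd_mult x y)"
  using cd_mult_neg by blast

lemma cd_mult_neg_right[simp]: "cd_mult x (cd_neg y) = cd_neg (cd_mult x y)"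
  using cd_mult_neg by blast

lemma cd_mult_signed_left: "cd_mult (signed s x) y = signed s (cd_mult x y)"
  by (auto simp: signed_def)

lemma cd_mult_signed_right: "cd_mult x (signed s y) = signed s (cd_mult x y)"
  by (auto simp: signed_def)

lemma cd_conj_signed: "cd_conj (signed s x) = signed s (cd_conj x)"
  by (auto simp: signed_def)

lemma cd_conj_basis: "cd_conj (basis l) = signed (csign l) (basis l)"
proof (induction l)
  case (Cons a l) then show ?case by (cases a) (simp_all add: signed_def CP_signed)
qed simp

lemma cd_mult_basis:
  "length i = length j \<Longrightarrow> cd_mult (basis i) (basis j) = signed (msign i j) (basis (bxor i j))"
proof (induction i j rule: msign.induct)
  case (1 i j) then show ?case by (simp add: CP_signed)
next
  case (2 i j) then show ?case by (simp add: CP_signed bxor_comm)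
next
  case (3 i j) then show ?case
    by (simp add: CP_signed cd_conj_basis cd_mult_signed_right signed_signed
        csign_is_sign msign_is_sign mult.commute)
next
  case (4 i j)
  have "is_sign (csign j * msign j i)" using csign_is_sign msign_is_sign is_sign_mult by blast
  with 4 show ?case
    by (simp add: CP_signed cd_conj_basis cd_mult_signed_left signed_signed csign_is_sign
        msign_is_sign cd_neg_signed bxor_comm)
qed auto

lemma cd_mult_Q:
  assumes x: "x \<in> Q n" and y: "y \<in> Q n"
  shows "cd_mult x y
    = signed (sgn_of x * sgn_of y * msign (idx x) (idx y)) (basis (bxor (idx x) (idx y)))"
proof -
  note X = Q_decomp[OF x] and Y = Q_decomp[OF y]
  have "cd_mult x y = cd_mult (signed (sgn_of x) (basis (idx x))) (signed (sgn_of y) (basis (idx y)))"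
    using X Y by metis
  also have "\<dots> = signed (sgn_of x) (signed (sgn_of y)
      (signed (msign (idx x) (idx y)) (basis (bxor (idx x) (idx y)))))"
    unfolding cd_mult_signed_left cd_mult_signed_right using cd_mult_basis[of "idx x" "idx y"] X Y
    by (simp add: signed_comm)
  also have "\<dots> = signed (sgn_of x * sgn_of y * msign (idx x) (idx y)) (basis (bxor (idx x) (idx y)))"
    using X Y by (simp add: signed_signed msign_is_sign is_sign_mult mult.assoc)
  finally show ?thesis .
qed

lemma cd_conj_Q:
  assumes x: "x \<in> Q n" shows "cd_conj x = signed (sgn_of x * csign (idx x)) (basis (idx x))"
proof -
  note X = Q_decomp[OF x]
  have "cd_conj x = cd_conj (signed (sgn_of x) (basis (idx x)))" using X by metis
  also have "\<dots> = signed (sgn_of x * csign (idx x)) (basis (idx x))"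
    unfolding cd_conj_signed cd_conj_basis using X csign_is_sign by (simp add: signed_signed)
  finally show ?thesis .
qed

lemma cd_conj_in_Q: "x \<in> Q n \<Longrightarrow> cd_conj x \<in> Q n"
  using cd_conj_Q[of x n] Q_decomp[of x n] csign_is_sign is_sign_mult signed_basis_in_Q by metis

lemma cd_conj_one: "cd_conj (cd_one n) = cd_one n"
  using cd_conj_Q[OF cd_one_in_Q, of n] unfolding cd_one_basis by simp

text \<open>
  Identities of the sign cocycle, read off from Q_n: e_0 is the unit (msign_zeros), e_u and
  e_i commute up to the sign csign u * csign i * csign (u xor i) (msign_commutator), and the
  alternative laws e_v (e_v e_i) = e_v^2 e_i and (e_i e_v) e_v = e_i e_v^2 hold, where
  e_v^2 = csign v (msign_alternative).\<close>

lemma msign_zeros: "length i = m \<Longrightarrow> msign (zeros m) i = 1 \<and> msign i (zeros m) = 1"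
proof (induction m arbitrary: i)
  case (Suc m)
  then obtain a i' where "i = a # i'" "length i' = m" by (cases i) auto
  with Suc show ?case by (cases a) auto
qed simp

lemma msign_commutator:
  "length u = length i \<Longrightarrow> msign u i * msign i u = csign u * csign i * csign (bxor u i)"
proof (induction u arbitrary: i)
  case (Cons a u)
  then obtain b i' where i: "i = b # i'" "length i' = length u" by (cases i) auto
  have "msign u i' * msign i' u = csign u * csign i' * csign (bxor u i')" using Cons i by simp
  with i show ?case by (cases a; cases b) (simp_all add: algebra_simps)
qed simp

lemma msign_swap:
  "length u = length i \<Longrightarrow> msign u i = csign u * csign i * csign (bxor u i) * msign i u"
proof -
  assume l: "length u = length i"
  have "msign u i = msign u i * msign i u * msign i u" by (simp add: mult.assoc)
  also have "\<dots> = csign u * csign i * csign (bxor u i) * msign i u"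
    using msign_commutator[OF l] by simp
  finally show ?thesis .
qed

lemma msign_alternative: "length v = length i \<Longrightarrow>
   msign v i * msign v (bxor i v) = csign v \<and> msign i v * msign (bxor i v) v = csign v"
proof (induction v arbitrary: i)
  case (Cons a v)
  then obtain b i' where i: "i = b # i'" "length i' = length v" by (cases i) auto
  have A: "msign v i' * msign v (bxor i' v) = csign v"
    and B: "msign i' v * msign (bxor i' v) v = csign v"
    using Cons i by auto
  have "msign v i' = csign v * csign i' * csign (bxor i' v) * msign i' v"
    using msign_swap[of v i'] i by (simp add: bxor_comm)
  then have H1: "msign v i' * msign (bxor i' v) v = csign i' * csign (bxor i' v)"
    using B by (simp add: mult_ac)
  have "msign i' v = csign v * csign i' * csign (bxor i' v) * msign v i'"
    using msign_swap[of i' v] i by (simp add: bxor_comm mult_ac)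
  then have H2: "msign i' v * msign v (bxor i' v) = csign i' * csign (bxor i' v)"
    using A by (simp add: mult_ac)
  show ?case using i A B H1 H2 by (cases a; cases b) (simp_all add: mult_ac)
qed simp

definition Words :: "nat \<Rightarrow> bool list set" where "Words m = {l. length l = m}"

lemma finite_Words[simp]: "finite (Words m)"
  using finite_lists_length_eq[of "UNIV :: bool set" m] by (simp add: Words_def)

lemma card_Words: "card (Words m) = 2 ^ m"
  using card_lists_length_eq[of "UNIV::bool set" m] by (simp add: Words_def card_UNIV_bool)

lemma Words_Suc: "Words (Suc m) = Cons False ` Words m \<union> Cons True ` Words m"
proof -
  have "l \<in> Cons False ` Words m \<union> Cons True ` Words m" if "length l = Suc m" for l
    using that by (cases l) (auto simp: Words_def)
  then show ?thesis by (auto simp: Words_def)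
qed

lemma Words_1: "Words (Suc 0) = {[False], [True]}"
  using Words_Suc[of 0] by (auto simp: Words_def)

lemma prod_Words_Suc: "(\<Prod>l\<in>Words (Suc m). f l)
    = (\<Prod>i\<in>Words m. f (False # i)) * (\<Prod>i\<in>Words m. f (True # i))"
proof -
  have "(\<Prod>l\<in>Words (Suc m). f l)
      = (\<Prod>l\<in>Cons False ` Words m. f l) * (\<Prod>l\<in>Cons True ` Words m. f l)"
    unfolding Words_Suc by (rule prod.union_disjoint) auto
  also have "\<dots> = (\<Prod>i\<in>Words m. f (False # i)) * (\<Prod>i\<in>Words m. f (True # i))"
    by (simp add: prod.reindex)
  finally show ?thesis .
qed

lemma prod_Words_const: "(\<Prod>i\<in>Words m. c) = c ^ (2 ^ m)"
  by (simp add: card_Words)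

text \<open>Translating by a fixed word permutes Words m.\<close>

lemma prod_Words_bxor_reindex:
  "length a = m \<Longrightarrow> (\<Prod>k\<in>Words m. f (bxor a k)) = (\<Prod>k\<in>Words m. f k)"
proof -
  assume a: "length a = m"
  have "bij_betw (bxor a) (Words m) (Words m)"
    by (rule bij_betw_byWitness[where f'="bxor a"]) (auto simp: Words_def a bxor_cancel)
  then show ?thesis by (rule prod.reindex_bij_betw)
qed

lemma even_card_minus_ones:
  assumes "\<And>i. i \<in> A \<Longrightarrow> is_sign (f i)" "finite A" "(\<Prod>i\<in>A. f i) = 1"
  shows "even (card {i \<in> A. f i = -1})"
proof -
  have "(\<Prod>i\<in>A. f i) = (\<Prod>i\<in>A. if f i = -1 then -1 else 1)"
    using assms(1) by (intro prod.cong) auto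
  also have "\<dots> = (-1) ^ card {i \<in> A. f i = -1}"
    using assms(2) by (simp add: prod.If_cases Int_def)
  finally show ?thesis using assms(3) by (simp add: minus_one_power_iff split: if_splits)
qed

lemma prod_csign: "m \<ge> 1 \<Longrightarrow> (\<Prod>i\<in>Words m. csign i) = -1"
proof (induction m rule: nat_induct_at_least)
  case base
  then show ?case by (simp add: Words_1)
next
  case (Suc m)
  have "(-1::int) ^ (2 ^ m) = 1" using Suc is_sign_pow_even[of "-1" m] by simp
  then show ?case using Suc by (simp add: prod_Words_Suc prod_Words_const card_Words)
qed

lemma prod_msign_fst: "length u = m \<Longrightarrow> m \<ge> 2 \<Longrightarrow> (\<Prod>i\<in>Words m. msign i u) = 1"
proof -
  assume "length u = m" "m \<ge> 2"
  then obtain a u' m' where u: "u = a # u'" "m = Suc m'" "length u' = m'" "m' \<ge> 1"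
    by (cases u) auto
  define c where "c = (if a then - csign u' else csign u')"
  define p where "p = (if a then (\<Prod>i\<in>Words m'. msign u' i) else (\<Prod>i\<in>Words m'. msign i u'))"
  have "(\<Prod>i\<in>Words m. msign i u) = p * (\<Prod>i\<in>Words m'. c * (if a then msign u' i else msign i u'))"
    using u by (cases a) (simp_all add: prod_Words_Suc p_def c_def mult.commute)
  also have "\<dots> = (p * p) * c ^ (2 ^ m')"
    by (cases a) (simp_all only: p_def if_True if_False prod.distrib prod_Words_const mult_ac)
  also have "p * p = 1" unfolding p_def by (simp add: prod.distrib[symmetric])
  also have "c ^ (2 ^ m') = 1" using u csign_is_sign[of u'] by (simp add: c_def is_sign_pow_even)
  finally show ?thesis by simp
qed

lemma prod_msign_snd_Cons: "length u' = m' \<Longrightarrow> m' \<ge> 1 \<Longrightarrow>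
   (\<Prod>i\<in>Words (Suc m'). msign (a # u') i)
     = (\<Prod>i\<in>Words m'. msign u' i) * (\<Prod>i\<in>Words m'. msign i u')"
proof (cases a)
  case True
  assume "m' \<ge> 1"
  have "(\<Prod>i\<in>Words (Suc m'). msign (a # u') i)
      = (\<Prod>i\<in>Words m'. msign u' i * csign i) * (\<Prod>i\<in>Words m'. (-1) * csign i * msign i u')"
    using True by (simp add: prod_Words_Suc)
  also have "\<dots> = (\<Prod>i\<in>Words m'. msign u' i) * (\<Prod>i\<in>Words m'. msign i u')
      * ((\<Prod>i\<in>Words m'. csign i) * (\<Prod>i\<in>Words m'. csign i)) * (-1) ^ (2 ^ m')"
    by (simp only: prod.distrib prod_Words_const mult_ac)
  finally show ?thesis using \<open>m' \<ge> 1\<close> by (simp add: prod_csign is_sign_pow_even)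
qed (simp add: prod_Words_Suc)

lemma prod_msign_snd: "m \<ge> 2 \<Longrightarrow> length u = m \<Longrightarrow> (\<Prod>i\<in>Words m. msign u i) = 1"
proof (induction m arbitrary: u rule: nat_induct_at_least)
  case base
  then obtain a b where u: "u = [a, b]" by (cases u; cases "tl u") auto
  have "(\<Prod>i\<in>Words 2. msign u i) = (\<Prod>i\<in>Words 1. msign [b] i) * (\<Prod>i\<in>Words 1. msign i [b])"
    using prod_msign_snd_Cons[of "[b]" 1 a] u by (simp add: numeral_2_eq_2)
  then show ?case by (cases b) (simp_all add: Words_1)
next
  case (Suc m)
  then obtain a u' where u: "u = a # u'" "length u' = m" by (cases u) auto
  then show ?case using Suc prod_msign_snd_Cons[of u' m a] prod_msign_fst[of u' m] by simp
qed

definition sign_fun :: "(bool list \<Rightarrow> int) \<Rightarrow> bool" where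
  "sign_fun e \<longleftrightarrow> (\<forall>j. is_sign (e j))"

lemma sign_funD: "sign_fun e \<Longrightarrow> is_sign (e j)" by (simp add: sign_fun_def)

lemma sign_fun_sq[simp]: "sign_fun e \<Longrightarrow> e j * e j = 1" by (simp add: sign_funD is_sign_sq)

lemma sign_fun_mult: "sign_fun e1 \<Longrightarrow> sign_fun e2 \<Longrightarrow> sign_fun (\<lambda>j. e1 j * e2 (f j))"
  unfolding sign_fun_def using is_sign_mult by blast

lemma sign_fun_msign: "sign_fun (msign l)" by (simp add: sign_fun_def msign_is_sign)

lemma sign_fun_minus_one: "sign_fun (\<lambda>_. -1)" by (simp add: sign_fun_def)

definition twist :: "nat \<Rightarrow> bool list \<Rightarrow> (bool list \<Rightarrow> int) \<Rightarrow> cd \<Rightarrow> cd" where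
  "twist n t e = (\<lambda>x\<in>Q n. signed (sgn_of x * e (idx x)) (basis (bxor t (idx x))))"

lemma twist_apply:
  "x \<in> Q n \<Longrightarrow> twist n t e x = signed (sgn_of x * e (idx x)) (basis (bxor t (idx x)))"
  by (simp add: twist_def)

lemma twist_cong: "(\<And>j. length j = n \<Longrightarrow> e j = e' j) \<Longrightarrow> twist n t e = twist n t e'"
  unfolding twist_def
proof (intro restrict_ext)
  fix x assume h: "\<And>j. length j = n \<Longrightarrow> e j = e' j" and x: "x \<in> Q n"
  then show "signed (sgn_of x * e (idx x)) (basis (bxor t (idx x)))
    = signed (sgn_of x * e' (idx x)) (basis (bxor t (idx x)))"
    using Q_sign_idx[OF x] by simp
qed

lemma twist_in_Q: "length t = n \<Longrightarrow> sign_fun e \<Longrightarrow> x \<in> Q n \<Longrightarrow> twist n t e x \<in> Q n"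
proof -
  assume "length t = n" "sign_fun e" "x \<in> Q n"
  then show ?thesis
    using Q_sign_idx[of x n] sign_funD[of e "idx x"]
    by (simp add: twist_apply signed_basis_in_Q is_sign_mult)
qed

lemma sgn_of_twist: "sign_fun e \<Longrightarrow> x \<in> Q n \<Longrightarrow> sgn_of (twist n t e x) = sgn_of x * e (idx x)"
  using Q_sign_idx[of x n] sign_funD[of e "idx x"] by (auto simp: twist_apply)

lemma idx_twist: "x \<in> Q n \<Longrightarrow> idx (twist n t e x) = bxor t (idx x)"
  by (simp add: twist_apply)

lemma twist_at_one: "length t = n \<Longrightarrow> twist n t e (cd_one n) = signed (e (zeros n)) (basis t)"
  using cd_one_in_Q[of n] by (simp add: twist_apply cd_one_basis)

lemma twist_inj:
  assumes "twist n t e = twist n t' e'" "length t = n" "length t' = n" "sign_fun e" "sign_fun e'"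
  shows "t = t' \<and> (\<forall>j. length j = n \<longrightarrow> e j = e' j)"
proof -
  have k: "signed (e j) (basis (bxor t j)) = signed (e' j) (basis (bxor t' j))"
    if "length j = n" for j
    using fun_cong[OF assms(1), of "basis j"] basis_in_Q[OF that] by (simp add: twist_apply)
  have "e j = e' j" if "length j = n" for j
    using arg_cong[OF k[OF that], of sgn_of] sign_funD[OF assms(4)] sign_funD[OF assms(5)] by simp
  moreover have "t = t'" using arg_cong[OF k[of "zeros n"], of idx] assms(2,3) by simp
  ultimately show ?thesis by blast
qed

lemma Ltr_twist: "x \<in> Q n \<Longrightarrow> Ltr n x = twist n (idx x) (\<lambda>j. sgn_of x * msign (idx x) j)"
  unfolding Ltr_def twist_def by (intro restrict_ext) (simp add: cd_mult_Q algebra_simps)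

lemma twist_compose:
  assumes "length t1 = n" "length t2 = n" "sign_fun e1"
  shows "compose (Q n) (twist n t2 e2) (twist n t1 e1)
    = twist n (bxor t2 t1) (\<lambda>j. e1 j * e2 (bxor t1 j))"
proof (rule ext)
  fix x show "compose (Q n) (twist n t2 e2) (twist n t1 e1) x
    = twist n (bxor t2 t1) (\<lambda>j. e1 j * e2 (bxor t1 j)) x"
  proof (cases "x \<in> Q n")
    case True
    have y: "twist n t1 e1 x \<in> Q n" by (rule twist_in_Q[OF assms(1,3) True])
    have "compose (Q n) (twist n t2 e2) (twist n t1 e1) x = twist n t2 e2 (twist n t1 e1 x)"
      using True by (simp add: compose_def)
    also have "\<dots> = signed (sgn_of x * e1 (idx x) * e2 (bxor t1 (idx x)))
        (basis (bxor t2 (bxor t1 (idx x))))"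
      unfolding twist_apply[OF y] sgn_of_twist[OF assms(3) True] idx_twist[OF True] ..
    also have "bxor t2 (bxor t1 (idx x)) = bxor (bxor t2 t1) (idx x)"
      using Q_sign_idx[OF True] assms by (simp add: bxor_assoc)
    finally show ?thesis using True by (simp add: twist_apply mult.assoc)
  qed (simp add: compose_def twist_def)
qed

lemma twist_id: "twist n (zeros n) (\<lambda>_. 1) = (\<lambda>x\<in>Q n. x)"
  unfolding twist_def
proof (intro restrict_ext)
  fix x assume x: "x \<in> Q n"
  have "signed (sgn_of x * 1) (basis (bxor (zeros n) (idx x))) = signed (sgn_of x) (basis (idx x))"
    using Q_sign_idx[OF x] by simp
  also have "\<dots> = x" using Q_decomp[OF x] by (rule sym[OF conjunct1])
  finally show "signed (sgn_of x * 1) (basis (bxor (zeros n) (idx x))) = x" .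
qed

lemma twist_inverse:
  assumes "length t = n" "sign_fun e"
  shows "compose (Q n) (twist n t e) (twist n t (\<lambda>j. e (bxor t j))) = (\<lambda>x\<in>Q n. x)"
    and "compose (Q n) (twist n t (\<lambda>j. e (bxor t j))) (twist n t e) = (\<lambda>x\<in>Q n. x)"
proof -
  have pe: "sign_fun (\<lambda>j. e (bxor t j))" using assms by (simp add: sign_fun_def)
  show "compose (Q n) (twist n t e) (twist n t (\<lambda>j. e (bxor t j))) = (\<lambda>x\<in>Q n. x)"
    unfolding twist_compose[OF assms(1) assms(1) pe] twist_id[symmetric] using assms
    by simp
  show "compose (Q n) (twist n t (\<lambda>j. e (bxor t j))) (twist n t e) = (\<lambda>x\<in>Q n. x)"
    unfolding twist_compose[OF assms(1) assms(1) assms(2)] twist_id[symmetric] using assms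
    by simp (intro twist_cong, simp add: bxor_cancel)
qed

lemma twist_Bij: assumes "length t = n" "sign_fun e" shows "twist n t e \<in> Bij (Q n)"
proof -
  let ?g = "twist n t (\<lambda>j. e (bxor t j))"
  have pe: "sign_fun (\<lambda>j. e (bxor t j))" using assms by (simp add: sign_fun_def)
  have "bij_betw (twist n t e) (Q n) (Q n)"
  proof (rule bij_betw_byWitness[where f'="?g"])
    show "\<forall>a\<in>Q n. ?g (twist n t e a) = a"
      using fun_cong[OF twist_inverse(2)[OF assms]] by (metis compose_eq restrict_apply')
    show "\<forall>a\<in>Q n. twist n t e (?g a) = a"
      using fun_cong[OF twist_inverse(1)[OF assms]] by (metis compose_eq restrict_apply')
  qed (use twist_in_Q[OF assms] twist_in_Q[OF assms(1) pe] in auto)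
  then show ?thesis unfolding Bij_def twist_def by simp
qed

lemma BijGroup_mult: "f \<in> Bij S \<Longrightarrow> g \<in> Bij S \<Longrightarrow> f \<otimes>\<^bsub>BijGroup S\<^esub> g = compose S f g"
  by (simp add: BijGroup_def)

lemma BijGroup_one: "\<one>\<^bsub>BijGroup S\<^esub> = (\<lambda>x\<in>S. x)"
  by (simp add: BijGroup_def)

lemma BijGroup_carrier: "carrier (BijGroup S) = Bij S"
  by (simp add: BijGroup_def)

lemma twist_mult:
  assumes "length t1 = n" "length t2 = n" "sign_fun e1" "sign_fun e2"
  shows "twist n t2 e2 \<otimes>\<^bsub>BijGroup (Q n)\<^esub> twist n t1 e1
    = twist n (bxor t2 t1) (\<lambda>j. e1 j * e2 (bxor t1 j))"
  using twist_compose[OF assms(1-3)] BijGroup_mult[OF twist_Bij[OF assms(2,4)] twist_Bij[OF assms(1,3)]]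
  by simp

lemma diag_twist_mult: "sign_fun e1 \<Longrightarrow> sign_fun e2 \<Longrightarrow>
  twist n (zeros n) e2 \<otimes>\<^bsub>BijGroup (Q n)\<^esub> twist n (zeros n) e1 = twist n (zeros n) (\<lambda>j. e1 j * e2 j)"
proof -
  assume "sign_fun e1" "sign_fun e2"
  then have "twist n (zeros n) e2 \<otimes>\<^bsub>BijGroup (Q n)\<^esub> twist n (zeros n) e1
      = twist n (zeros n) (\<lambda>j. e1 j * e2 (bxor (zeros n) j))"
    using twist_mult[of "zeros n" n "zeros n" e1 e2] by simp
  also have "\<dots> = twist n (zeros n) (\<lambda>j. e1 j * e2 j)" by (rule twist_cong) simp
  finally show ?thesis .
qed

lemma twist_inv:
  assumes "length t = n" "sign_fun e"
  shows "inv\<^bsub>BijGroup (Q n)\<^esub> twist n t e = twist n t (\<lambda>j. e (bxor t j))"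
proof (rule group.inv_equality[OF group_BijGroup])
  have pe: "sign_fun (\<lambda>j. e (bxor t j))" using assms by (simp add: sign_fun_def)
  show "twist n t (\<lambda>j. e (bxor t j)) \<otimes>\<^bsub>BijGroup (Q n)\<^esub> twist n t e = \<one>\<^bsub>BijGroup (Q n)\<^esub>"
    using BijGroup_mult[OF twist_Bij[OF assms(1) pe] twist_Bij[OF assms]] twist_inverse(2)[OF assms]
    by (simp add: BijGroup_one)
  show "twist n t e \<in> carrier (BijGroup (Q n))"
    unfolding BijGroup_carrier by (rule twist_Bij[OF assms])
  show "twist n t (\<lambda>j. e (bxor t j)) \<in> carrier (BijGroup (Q n))"
    unfolding BijGroup_carrier by (rule twist_Bij[OF assms(1) pe])
qed

definition pair_cond :: "nat \<Rightarrow> bool list \<Rightarrow> (bool list \<Rightarrow> int) \<Rightarrow> bool" where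
  "pair_cond m t e \<longleftrightarrow> (\<exists>c. is_sign c \<and> (\<forall>i. length i = m \<longrightarrow>
      e (False#i) * e (True#i) = c * csign i * csign (bxor i (tl t))))"

definition parity_cond :: "nat \<Rightarrow> bool list \<Rightarrow> (bool list \<Rightarrow> int) \<Rightarrow> bool" where
  "parity_cond m t e \<longleftrightarrow> (\<Prod>i\<in>Words m. e (False#i)) = (if hd t then -1 else 1)"

definition admissible :: "nat \<Rightarrow> bool list \<Rightarrow> (bool list \<Rightarrow> int) \<Rightarrow> bool" where
  "admissible m t e \<longleftrightarrow>
     length t = Suc m \<and> sign_fun e \<and> pair_cond m t e \<and> parity_cond m t e"

definition Adm :: "nat \<Rightarrow> (cd \<Rightarrow> cd) set" where
  "Adm m = {twist (Suc m) t e | t e. admissible m t e}"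

text \<open>Reindexing e by a shift s permutes each pair {0k, 1k}, so the pair condition survives
  with the pair index k = tail s xor i.\<close>

lemma pair_cond_shift:
  assumes c: "\<And>i. length i = m \<Longrightarrow> e (False#i) * e (True#i) = c * csign i * csign (bxor i t')"
    and s: "length s = Suc m" and i: "length i = m"
  shows "e (bxor s (False#i)) * e (bxor s (True#i))
    = c * csign (bxor (tl s) i) * csign (bxor (bxor (tl s) i) t')"
proof -
  obtain a s' where s': "s = a # s'" "length s' = m" using s by (cases s) auto
  have "length (bxor s' i) = m" using s' i by simp
  from c[OF this] show ?thesis using s' by (cases a) (simp_all add: mult.commute)
qed

text \<open>Under the pair condition the two halves have the same sign product, since the product
  of csign i * csign (i xor t') over all i is 1.\<close>

lemma prod_pair_cond:
  assumes "m \<ge> 1" "sign_fun e" "pair_cond m t e" "length t = Suc m"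
  shows "(\<Prod>i\<in>Words m. e (True#i)) = (\<Prod>i\<in>Words m. e (False#i))"
proof -
  obtain c where c: "is_sign c"
    "\<And>i. length i = m \<Longrightarrow> e (False#i) * e (True#i) = c * csign i * csign (bxor i (tl t))"
    using assms(3) unfolding pair_cond_def by blast
  have lt: "length (tl t) = m" using assms(4) by simp
  have "e (True#i) = e (False#i) * (c * csign i * csign (bxor (tl t) i))" if "i \<in> Words m" for i
  proof -
    have "e (True#i) = e (False#i) * (e (False#i) * e (True#i))"
      using assms(2) by (simp add: mult.assoc[symmetric])
    also have "e (False#i) * e (True#i) = c * csign i * csign (bxor (tl t) i)"
      using c(2)[of i] that by (simp add: Words_def bxor_comm)
    finally show ?thesis .
  qed
  then have "(\<Prod>i\<in>Words m. e (True#i))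
      = (\<Prod>i\<in>Words m. e (False#i) * (c * csign i * csign (bxor (tl t) i)))"
    by (rule prod.cong[OF refl])
  also have "\<dots> = (\<Prod>i\<in>Words m. e (False#i))
      * (c ^ 2 ^ m * (\<Prod>i\<in>Words m. csign i) * (\<Prod>i\<in>Words m. csign (bxor (tl t) i)))"
    by (simp only: prod.distrib prod_Words_const)
  also have "(\<Prod>i\<in>Words m. csign (bxor (tl t) i)) = (\<Prod>i\<in>Words m. csign i)"
    using prod_Words_bxor_reindex[OF lt, of csign] .
  finally show ?thesis using prod_csign[OF assms(1)] is_sign_pow_even[OF c(1) assms(1)] by simp
qed

lemma prod_shift:
  assumes "m \<ge> 1" "sign_fun e" "pair_cond m t e" "length t = Suc m" "length s = Suc m"
  shows "(\<Prod>i\<in>Words m. e (bxor s (False#i))) = (\<Prod>i\<in>Words m. e (False#i))"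
proof -
  obtain a s' where s': "s = a # s'" "length s' = m" using assms(5) by (cases s) auto
  have "(\<Prod>i\<in>Words m. e (bxor s (False#i))) = (\<Prod>i\<in>Words m. e (a # bxor s' i))"
    using s' by simp
  also have "\<dots> = (\<Prod>i\<in>Words m. e (a # i))"
    using prod_Words_bxor_reindex[OF s'(2), of "\<lambda>k. e (a # k)"] .
  also have "\<dots> = (\<Prod>i\<in>Words m. e (False # i))"
    using prod_pair_cond[OF assms(1-4)] by (cases a) auto
  finally show ?thesis .
qed

lemma admissible_mult:
  assumes m: "m \<ge> 1" and 1: "admissible m t1 e1" and 2: "admissible m t2 e2"
  shows "admissible m (bxor t2 t1) (\<lambda>j. e1 j * e2 (bxor t1 j))"
proof -
  have l: "length t1 = Suc m" "length t2 = Suc m" "sign_fun e1" "sign_fun e2"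
    using 1 2 unfolding admissible_def by auto
  obtain c1 where c1: "is_sign c1"
    "\<And>i. length i = m \<Longrightarrow> e1 (False#i) * e1 (True#i) = c1 * csign i * csign (bxor i (tl t1))"
    using 1 unfolding admissible_def pair_cond_def by auto
  obtain c2 where c2: "is_sign c2"
    "\<And>i. length i = m \<Longrightarrow> e2 (False#i) * e2 (True#i) = c2 * csign i * csign (bxor i (tl t2))"
    using 2 unfolding admissible_def pair_cond_def by auto
  have "(e1 (False#i) * e2 (bxor t1 (False#i))) * (e1 (True#i) * e2 (bxor t1 (True#i)))
      = c1 * c2 * csign i * csign (bxor i (tl (bxor t2 t1)))" if i: "length i = m" for i
  proof -
    have "bxor (bxor (tl t1) i) (tl t2) = bxor i (bxor (tl t2) (tl t1))"
      using bxor_rotate[of "tl t1" i "tl t2"] i l by simp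
    moreover have "tl (bxor t2 t1) = bxor (tl t2) (tl t1)"
      using l by (cases t1; cases t2) auto
    ultimately have e2: "e2 (bxor t1 (False#i)) * e2 (bxor t1 (True#i))
        = c2 * csign (bxor i (tl t1)) * csign (bxor i (tl (bxor t2 t1)))"
      using pair_cond_shift[OF c2(2) l(1) i] by (simp add: bxor_comm)
    have "(e1 (False#i) * e2 (bxor t1 (False#i))) * (e1 (True#i) * e2 (bxor t1 (True#i)))
        = (e1 (False#i) * e1 (True#i)) * (e2 (bxor t1 (False#i)) * e2 (bxor t1 (True#i)))"
      by (simp only: mult_ac)
    also have "\<dots> = c1 * c2 * csign i * csign (bxor i (tl (bxor t2 t1)))
        * (csign (bxor i (tl t1)) * csign (bxor i (tl t1)))"
      unfolding c1(2)[OF i] e2 by (simp only: mult_ac)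
    finally show ?thesis by simp
  qed
  then have "pair_cond m (bxor t2 t1) (\<lambda>j. e1 j * e2 (bxor t1 j))"
    unfolding pair_cond_def using c1(1) c2(1) by (intro exI[of _ "c1 * c2"]) auto
  moreover have "parity_cond m (bxor t2 t1) (\<lambda>j. e1 j * e2 (bxor t1 j))"
    using 1 2 prod_shift[OF m _ _ _ l(1), of e2 t2] l
    by (cases t1; cases t2) (auto simp: admissible_def parity_cond_def prod.distrib)
  ultimately show ?thesis
    using l sign_fun_mult[OF l(3,4)] unfolding admissible_def by simp
qed

lemma admissible_inv:
  assumes m: "m \<ge> 1" and a: "admissible m t e"
  shows "admissible m t (\<lambda>j. e (bxor t j))"
proof -
  have l: "length t = Suc m" "sign_fun e" using a unfolding admissible_def by auto
  obtain c where c: "is_sign c"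
    "\<And>i. length i = m \<Longrightarrow> e (False#i) * e (True#i) = c * csign i * csign (bxor i (tl t))"
    using a unfolding admissible_def pair_cond_def by auto
  have "e (bxor t (False#i)) * e (bxor t (True#i)) = c * csign i * csign (bxor i (tl t))"
    if i: "length i = m" for i
  proof -
    have "bxor (bxor (tl t) i) (tl t) = i" using i l bxor_cancel[of i "tl t"] by (simp add: bxor_comm)
    then show ?thesis using pair_cond_shift[OF c(2) l(1) i] by (simp add: bxor_comm mult_ac)
  qed
  then have "pair_cond m t (\<lambda>j. e (bxor t j))"
    unfolding pair_cond_def using c(1) by blast
  moreover have "parity_cond m t (\<lambda>j. e (bxor t j))"
    using a prod_shift[OF m l(2) _ l(1) l(1)] unfolding admissible_def parity_cond_def by auto
  ultimately show ?thesis using a unfolding admissible_def sign_fun_def by auto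
qed

lemma admissible_id: "admissible m (zeros (Suc m)) (\<lambda>_. 1)"
  unfolding admissible_def pair_cond_def parity_cond_def sign_fun_def
  by (auto intro: exI[of _ 1])

lemma Adm_subgroup: assumes "m \<ge> 1" shows "subgroup (Adm m) (BijGroup (Q (Suc m)))"
proof (rule group.subgroupI[OF group_BijGroup])
  show "Adm m \<subseteq> carrier (BijGroup (Q (Suc m)))"
    unfolding Adm_def BijGroup_carrier admissible_def using twist_Bij by blast
  show "Adm m \<noteq> {}" using admissible_id unfolding Adm_def by blast
next
  fix f assume "f \<in> Adm m"
  then obtain t e where f: "f = twist (Suc m) t e" "admissible m t e"
    unfolding Adm_def by blast
  then show "inv\<^bsub>BijGroup (Q (Suc m))\<^esub> f \<in> Adm m"
    using twist_inv[of t "Suc m" e] admissible_inv[OF assms f(2)]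
    unfolding Adm_def admissible_def by auto
next
  fix f g assume "f \<in> Adm m" "g \<in> Adm m"
  then obtain t1 e1 t2 e2 where
    f: "f = twist (Suc m) t1 e1" "admissible m t1 e1" and
    g: "g = twist (Suc m) t2 e2" "admissible m t2 e2"
    unfolding Adm_def by blast
  then have "f \<otimes>\<^bsub>BijGroup (Q (Suc m))\<^esub> g
      = twist (Suc m) (bxor t1 t2) (\<lambda>j. e2 j * e1 (bxor t2 j))"
    using twist_mult[of t2 "Suc m" t1 e2 e1] unfolding admissible_def by auto
  then show "f \<otimes>\<^bsub>BijGroup (Q (Suc m))\<^esub> g \<in> Adm m"
    using admissible_mult[OF assms g(2) f(2)] unfolding Adm_def by blast
qed

lemma Ltr_pair_cond:
  assumes x: "x \<in> Q (Suc m)"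
  shows "pair_cond m (idx x) (\<lambda>j. sgn_of x * msign (idx x) j)"
proof -
  obtain a u where u: "idx x = a # u" "length u = m" using Q_sign_idx[OF x] by (cases "idx x") auto
  have sq: "sgn_of x * sgn_of x = 1" using Q_sign_idx[OF x] by auto
  define c where "c = (if a then - csign u else csign u)"
  have "(sgn_of x * msign (idx x) (False#i)) * (sgn_of x * msign (idx x) (True#i))
      = c * csign i * csign (bxor i (tl (idx x)))" if i: "length i = m" for i
  proof -
    have "(sgn_of x * msign (idx x) (False#i)) * (sgn_of x * msign (idx x) (True#i))
        = (sgn_of x * sgn_of x) * (if a then - (msign u i * msign i u) * (csign i * csign i)
            else msign u i * msign i u)"
      using u by (cases a) (simp_all add: mult_ac)
    also have "\<dots> = c * csign i * csign (bxor i (tl (idx x)))"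
      using sq msign_commutator[of u i] u i by (simp add: c_def bxor_comm)
    finally show ?thesis .
  qed
  moreover have "is_sign c" using csign_is_sign[of u] by (auto simp: c_def)
  ultimately show ?thesis unfolding pair_cond_def by blast
qed

lemma Ltr_parity_cond:
  assumes m: "m \<ge> 2" and x: "x \<in> Q (Suc m)"
  shows "parity_cond m (idx x) (\<lambda>j. sgn_of x * msign (idx x) j)"
proof -
  obtain a u where u: "idx x = a # u" "length u = m" using Q_sign_idx[OF x] by (cases "idx x") auto
  have m1: "m \<ge> 1" using m by simp
  have "(\<Prod>i\<in>Words m. sgn_of x * msign (idx x) (False # i))
      = sgn_of x ^ (2 ^ m) * (\<Prod>i\<in>Words m. msign u i) * (if a then \<Prod>i\<in>Words m. csign i else 1)"
    using u by (cases a) (simp_all add: prod.distrib card_Words)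
  also have "\<dots> = (if a then -1 else 1)"
    using is_sign_pow_even[OF _ m1] Q_sign_idx[OF x] prod_msign_snd[OF m u(2)] prod_csign[OF m1]
    by simp
  finally show ?thesis unfolding parity_cond_def using u by simp
qed

lemma Ltr_in_Adm: assumes "m \<ge> 2" "x \<in> Q (Suc m)" shows "Ltr (Suc m) x \<in> Adm m"
proof -
  have "sign_fun (\<lambda>j. sgn_of x * msign (idx x) j)"
    unfolding sign_fun_def using Q_sign_idx[OF assms(2)] msign_is_sign is_sign_mult by blast
  then have "admissible m (idx x) (\<lambda>j. sgn_of x * msign (idx x) j)"
    using Q_sign_idx[OF assms(2)] Ltr_pair_cond[OF assms(2)] Ltr_parity_cond[OF assms]
    unfolding admissible_def by blast
  then show ?thesis unfolding Ltr_twist[OF assms(2)] Adm_def by blast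
qed

lemma Ltr_carrier: "Ltr n ` Q n \<subseteq> carrier (BijGroup (Q n))"
proof
  fix f assume "f \<in> Ltr n ` Q n"
  then obtain x where x: "x \<in> Q n" "f = Ltr n x" by blast
  have "sign_fun (\<lambda>j. sgn_of x * msign (idx x) j)"
    unfolding sign_fun_def using Q_sign_idx[OF x(1)] msign_is_sign is_sign_mult by blast
  then show "f \<in> carrier (BijGroup (Q n))"
    unfolding x(2) Ltr_twist[OF x(1)] BijGroup_carrier using twist_Bij Q_sign_idx[OF x(1)] by blast
qed

lemma Mlt_l_subgroup: "subgroup (Mlt_l n) (BijGroup (Q n))"
  unfolding Mlt_l_def by (rule group.generate_is_subgroup[OF group_BijGroup Ltr_carrier])

lemma Mlt_l_subset_Adm: assumes "m \<ge> 2" shows "Mlt_l (Suc m) \<subseteq> Adm m"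
  unfolding Mlt_l_def
  by (rule group.generate_subgroup_incl[OF group_BijGroup])
     (use Ltr_in_Adm[OF assms] Adm_subgroup[of m] assms in auto)

lemma Ltr_in_Mlt_l: "x \<in> Q n \<Longrightarrow> Ltr n x \<in> Mlt_l n"
  unfolding Mlt_l_def by (rule generate.incl) blast

lemma Mlt_l_mult_closed:
  "f \<in> Mlt_l n \<Longrightarrow> g \<in> Mlt_l n \<Longrightarrow> f \<otimes>\<^bsub>BijGroup (Q n)\<^esub> g \<in> Mlt_l n"
  using subgroup.m_closed[OF Mlt_l_subgroup] by blast

lemma Ltr_basis_in_Mlt_l: "length l = n \<Longrightarrow> twist n l (msign l) \<in> Mlt_l n"
  using Ltr_in_Mlt_l[OF basis_in_Q, of l n] Ltr_twist[OF basis_in_Q, of l n] by simp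

definition diag_cond :: "nat \<Rightarrow> (bool list \<Rightarrow> int) \<Rightarrow> bool" where
  "diag_cond m e \<longleftrightarrow> sign_fun e
     \<and> (\<exists>c. is_sign c \<and> (\<forall>i. length i = m \<longrightarrow> e (True#i) = c * e (False#i)))
     \<and> (\<Prod>i\<in>Words m. e (False#i)) = 1"

definition Diag :: "nat \<Rightarrow> (cd \<Rightarrow> cd) set" where
  "Diag m = {twist (Suc m) (zeros (Suc m)) e | e. diag_cond m e \<and> e (zeros (Suc m)) = 1}"

lemma admissible_zeros_iff: "admissible m (zeros (Suc m)) e \<longleftrightarrow> diag_cond m e"
proof -
  have "e (False#i) * e (True#i) = c \<longleftrightarrow> e (True#i) = c * e (False#i)" if "sign_fun e" for c i
    using sign_funD[OF that, of "False#i"] by auto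
  then show ?thesis
    unfolding admissible_def diag_cond_def pair_cond_def parity_cond_def by auto
qed

lemma Mlt_l_diag_cond:
  assumes "m \<ge> 2" "sign_fun e" "twist (Suc m) (zeros (Suc m)) e \<in> Mlt_l (Suc m)"
  shows "diag_cond m e"
proof -
  obtain t e' where te: "twist (Suc m) (zeros (Suc m)) e = twist (Suc m) t e'" "admissible m t e'"
    using assms(3) Mlt_l_subset_Adm[OF assms(1)] unfolding Adm_def by blast
  then have "t = zeros (Suc m)" and ee: "\<And>j. length j = Suc m \<Longrightarrow> e j = e' j"
    using twist_inj[OF te(1) _ _ assms(2)] unfolding admissible_def by auto
  then have "diag_cond m e'" using te(2) admissible_zeros_iff by simp
  moreover have "(\<Prod>i\<in>Words m. e (False#i)) = (\<Prod>i\<in>Words m. e' (False#i))"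
    by (rule prod.cong[OF refl]) (simp add: ee Words_def)
  ultimately show ?thesis using assms(2) ee unfolding diag_cond_def by simp
qed

lemma Inn_l_subset_Diag: assumes "m \<ge> 2" shows "Inn_l (Suc m) \<subseteq> Diag m"
proof
  fix f assume "f \<in> Inn_l (Suc m)"
  then have "f \<in> Adm m" and f1: "f (cd_one (Suc m)) = cd_one (Suc m)"
    using Mlt_l_subset_Adm[OF assms] unfolding Inn_l_def by auto
  then obtain t e where f: "f = twist (Suc m) t e" "admissible m t e"
    unfolding Adm_def by blast
  then have l: "length t = Suc m" "sign_fun e" unfolding admissible_def by auto
  have eq: "signed (e (zeros (Suc m))) (basis t) = basis (zeros (Suc m))"
    using f1 twist_at_one[OF l(1)] f(1) cd_one_basis by simp
  have "t = zeros (Suc m)" using arg_cong[OF eq, of idx] by simp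
  moreover have "e (zeros (Suc m)) = 1"
    using arg_cong[OF eq, of sgn_of] sign_funD[OF l(2)] by simp
  ultimately show "f \<in> Diag m"
    using f admissible_zeros_iff unfolding Diag_def by blast
qed

lemma twist_id_in_Mlt_l: "twist n (zeros n) (\<lambda>_. 1) \<in> Mlt_l n"
  using subgroup.one_closed[OF Mlt_l_subgroup] by (simp add: BijGroup_one twist_id)

text \<open>Negation is the left translation by -1 = -e_0.\<close>

lemma twist_minus_one_in_Mlt_l: "twist n (zeros n) (\<lambda>_. -1) \<in> Mlt_l n"
proof -
  have q: "cd_neg (basis (zeros n)) \<in> Q n"
    using signed_basis_in_Q[of "-1" "zeros n" n] by (simp add: signed_def)
  have "Ltr n (cd_neg (basis (zeros n))) = twist n (zeros n) (\<lambda>j. - msign (zeros n) j)"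
    using Ltr_twist[OF q] by simp
  also have "\<dots> = twist n (zeros n) (\<lambda>_. -1)" by (rule twist_cong) (simp add: msign_zeros)
  finally show ?thesis using Ltr_in_Mlt_l[OF q] by simp
qed

text \<open>The sign identity behind the product e_{0v} (e_{1v} (e_{10} x)) = - csign i csign (i xor v) x
  for x = +-e_{ai}; it rests on the commutator and alternative laws.\<close>

lemma msign_triple:
  assumes v: "length v = m" and i: "length i = m"
  shows "msign (True # zeros m) (a#i) * msign (True#v) ((\<not> a)#i) * msign (False#v) (a # bxor v i)
    = - (csign i * csign (bxor i v))"
proof -
  have swap1: "msign i v = csign i * csign v * csign (bxor i v) * msign v i"
    and swap2: "msign v i = csign v * csign i * csign (bxor v i) * msign i v"
    using msign_swap[of i v] msign_swap[of v i] v i by simp_all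
  have alt: "msign v i * msign v (bxor i v) = csign v" "msign i v * msign (bxor i v) v = csign v"
    using msign_alternative[of v i] v i by auto
  show ?thesis
  proof (cases a)
    case False
    have "msign (True # zeros m) (a#i) * msign (True#v) ((\<not> a)#i) * msign (False#v) (a # bxor v i)
        = - (msign i v * msign v (bxor i v))"
      using False i by (simp add: msign_zeros bxor_comm mult_ac)
    also have "\<dots> = - (csign i * csign v * csign (bxor i v) * (msign v i * msign v (bxor i v)))"
      by (subst swap1) (simp add: mult_ac)
    finally show ?thesis using alt by (simp add: mult_ac)
  next
    case True
    have "msign (True # zeros m) (a#i) * msign (True#v) ((\<not> a)#i) * msign (False#v) (a # bxor v i)
        = - (msign v i * msign (bxor i v) v)"
      using True i by (simp add: msign_zeros bxor_comm mult_ac)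
    also have "\<dots> = - (csign v * csign i * csign (bxor v i) * (msign i v * msign (bxor i v) v))"
      by (subst swap2) (simp add: mult_ac)
    finally show ?thesis using alt by (simp add: mult_ac bxor_comm)
  qed
qed

lemma csign_pair_in_Mlt_l:
  assumes v: "length v = m"
  shows "twist (Suc m) (zeros (Suc m)) (\<lambda>j. csign (tl j) * csign (bxor (tl j) v)) \<in> Mlt_l (Suc m)"
proof -
  let ?n = "Suc m" and ?z = "zeros m" and ?G = "BijGroup (Q (Suc m))"
  have l: "length (True # ?z) = ?n" "length (True # v) = ?n" "length (False # v) = ?n"
    using v by auto
  let ?e1 = "\<lambda>j. msign (True # ?z) j * msign (True # v) (bxor (True # ?z) j)"
  let ?e2 = "\<lambda>j. ?e1 j * msign (False # v) (bxor (False # v) j)"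
  have pe1: "sign_fun ?e1" and pe2: "sign_fun ?e2"
    by (intro sign_fun_mult sign_fun_msign)+
  have "twist ?n (False # v) (msign (False # v))
      \<otimes>\<^bsub>?G\<^esub> (twist ?n (True # v) (msign (True # v)) \<otimes>\<^bsub>?G\<^esub> twist ?n (True # ?z) (msign (True # ?z)))
    = twist ?n (zeros ?n) ?e2"
    using twist_mult[OF l(1,2) sign_fun_msign sign_fun_msign] twist_mult[OF l(3) l(3) pe1 sign_fun_msign] v
    by simp
  then have "twist ?n (zeros ?n) ?e2 \<in> Mlt_l ?n"
    by (metis Mlt_l_mult_closed Ltr_basis_in_Mlt_l l)
  then have "twist ?n (zeros ?n) (\<lambda>_. -1) \<otimes>\<^bsub>?G\<^esub> twist ?n (zeros ?n) ?e2 \<in> Mlt_l ?n"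
    using Mlt_l_mult_closed twist_minus_one_in_Mlt_l by blast
  also have "twist ?n (zeros ?n) (\<lambda>_. -1) \<otimes>\<^bsub>?G\<^esub> twist ?n (zeros ?n) ?e2
      = twist ?n (zeros ?n) (\<lambda>j. csign (tl j) * csign (bxor (tl j) v))"
    unfolding diag_twist_mult[OF pe2 sign_fun_minus_one]
  proof (rule twist_cong)
    fix j :: "bool list" assume "length j = ?n"
    then obtain a i where "j = a # i" "length i = m" by (cases j) auto
    then show "?e2 j * -1 = csign (tl j) * csign (bxor (tl j) v)"
      using msign_triple[OF v, of i a] by simp
  qed
  finally show ?thesis .
qed

definition flip :: "bool list set \<Rightarrow> bool list \<Rightarrow> int" where
  "flip A j = (if tl j \<in> A then -1 else 1)"

lemma sign_fun_flip: "sign_fun (flip A)" by (simp add: sign_fun_def flip_def)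

text \<open>Since csign i = -1 unless i = 0, the previous product is exactly flip {0, v}.\<close>

lemma flip_pair_in_Mlt_l:
  assumes "length v = m" "v \<noteq> zeros m"
  shows "twist (Suc m) (zeros (Suc m)) (flip {zeros m, v}) \<in> Mlt_l (Suc m)"
proof -
  have "twist (Suc m) (zeros (Suc m)) (flip {zeros m, v})
      = twist (Suc m) (zeros (Suc m)) (\<lambda>j. csign (tl j) * csign (bxor (tl j) v))"
  proof (rule twist_cong)
    fix j :: "bool list" assume "length j = Suc m"
    then obtain a i where ai: "j = a # i" "length i = m" by (cases j) auto
    have "csign i = (if i = zeros m then 1 else -1)"
      using csign_eq_1_iff[of i] ai csign_is_sign[of i] by auto
    moreover have "csign (bxor i v) = (if i = v then 1 else -1)"
      using csign_eq_1_iff[of "bxor i v"] bxor_eq_zeros_iff[of i v] ai assms csign_is_sign[of "bxor i v"]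
      by auto
    ultimately show "flip {zeros m, v} j = csign (tl j) * csign (bxor (tl j) v)"
      using ai assms by (auto simp: flip_def)
  qed
  then show ?thesis using csign_pair_in_Mlt_l[OF assms(1)] by simp
qed

text \<open>Products of the pair flips give every flip A with A of even size: for B avoiding 0,
  the set B together with 0 when B is odd.\<close>

lemma flip_in_Mlt_l:
  assumes "finite B" "B \<subseteq> Words m - {zeros m}"
  shows "twist (Suc m) (zeros (Suc m)) (flip (B \<union> (if odd (card B) then {zeros m} else {})))
    \<in> Mlt_l (Suc m)"
  using assms
proof (induction B rule: finite_induct)
  case empty
  have "twist (Suc m) (zeros (Suc m)) (flip {}) = twist (Suc m) (zeros (Suc m)) (\<lambda>_. 1)"
    by (rule twist_cong) (simp add: flip_def)
  then show ?case using twist_id_in_Mlt_l[of "Suc m"] by (simp del: replicate_Suc)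
next
  case (insert v B)
  have v: "length v = m" "v \<noteq> zeros m" using insert(4) by (auto simp: Words_def)
  let ?P = "B \<union> (if odd (card B) then {zeros m} else {})"
  let ?P' = "insert v B \<union> (if odd (card (insert v B)) then {zeros m} else {})"
  have "twist (Suc m) (zeros (Suc m)) (flip {zeros m, v})
      \<otimes>\<^bsub>BijGroup (Q (Suc m))\<^esub> twist (Suc m) (zeros (Suc m)) (flip ?P)
    = twist (Suc m) (zeros (Suc m)) (\<lambda>j. flip ?P j * flip {zeros m, v} j)"
    by (rule diag_twist_mult[OF sign_fun_flip sign_fun_flip])
  also have "\<dots> = twist (Suc m) (zeros (Suc m)) (flip ?P')"
    by (rule twist_cong) (use insert(1,2,4) v in \<open>auto simp: flip_def\<close>)
  finally show ?case
    using Mlt_l_mult_closed[OF flip_pair_in_Mlt_l[OF v] insert(3)] insert(4) by simp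
qed

lemma diag_even_in_Mlt_l:
  assumes e: "sign_fun e" "\<And>i. length i = m \<Longrightarrow> e (True#i) = e (False#i)"
    "(\<Prod>i\<in>Words m. e (False#i)) = 1"
  shows "twist (Suc m) (zeros (Suc m)) e \<in> Mlt_l (Suc m)"
proof -
  define A where "A = {i \<in> Words m. e (False#i) = -1}"
  have fA: "finite A" unfolding A_def by simp
  have evA: "even (card A)"
    unfolding A_def using even_card_minus_ones[OF sign_funD[OF e(1)] finite_Words e(3)] .
  define B where "B = A - {zeros m}"
  have B: "finite B" "B \<subseteq> Words m - {zeros m}" using fA unfolding B_def A_def by auto
  have "B \<union> (if odd (card B) then {zeros m} else {}) = A"
  proof (cases "zeros m \<in> A")
    case True
    then have "card A = Suc (card B)" unfolding B_def using card_Suc_Diff1[OF fA True] by simp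
    then show ?thesis using evA True unfolding B_def by auto
  qed (use evA B_def in auto)
  then have "twist (Suc m) (zeros (Suc m)) (flip A) \<in> Mlt_l (Suc m)"
    using flip_in_Mlt_l[OF B] by simp
  moreover have "twist (Suc m) (zeros (Suc m)) (flip A) = twist (Suc m) (zeros (Suc m)) e"
  proof (rule twist_cong)
    fix j :: "bool list" assume "length j = Suc m"
    then obtain a i where ai: "j = a # i" "length i = m" by (cases j) auto
    have "e j = e (False # i)" using ai e(2) by (cases a) auto
    then show "flip A j = e j" using ai sign_funD[OF e(1), of "False # i"]
      unfolding flip_def A_def Words_def by auto
  qed
  ultimately show ?thesis by simp
qed

text \<open>A diagonal product of three left translations realising the constant c = -1:
  for suitable u, v, w the map e_{0u} (e_{0v} (e_{0w} x)) is diagonal, and its pair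
  constant is the commutator sign of e_v and e_w, which is -1.\<close>

lemma odd_diag_in_Mlt_l:
  assumes "m \<ge> 2"
  obtains eX where "sign_fun eX" "twist (Suc m) (zeros (Suc m)) eX \<in> Mlt_l (Suc m)"
    "\<And>i. length i = m \<Longrightarrow> eX (True#i) = - eX (False#i)" "(\<Prod>i\<in>Words m. eX (False#i)) = 1"
proof -
  obtain k where k: "m = Suc (Suc k)" using assms by (metis add_2_eq_Suc le_Suc_ex)
  define u where "u = True # zeros (Suc k)"
  define v where "v = False # True # zeros k"
  define w where "w = True # True # zeros k"
  let ?n = "Suc m" and ?G = "BijGroup (Q (Suc m))"
  have l: "length (False # u) = ?n" "length (False # v) = ?n" "length (False # w) = ?n"
    using k by (auto simp: u_def v_def w_def)
  have xuv: "bxor (False # v) (False # w) = False # u" "bxor (False # u) (False # u) = zeros ?n"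
    using k by (auto simp: u_def v_def w_def simp del: replicate_Suc)
  let ?e1 = "\<lambda>j. msign (False # w) j * msign (False # v) (bxor (False # w) j)"
  define eX where "eX = (\<lambda>j. ?e1 j * msign (False # u) (bxor (False # u) j))"
  have pe1: "sign_fun ?e1" and peX: "sign_fun eX"
    unfolding eX_def by (intro sign_fun_mult sign_fun_msign)+
  have "twist ?n (False # u) (msign (False # u)) \<otimes>\<^bsub>?G\<^esub>
      (twist ?n (False # v) (msign (False # v)) \<otimes>\<^bsub>?G\<^esub> twist ?n (False # w) (msign (False # w)))
    = twist ?n (zeros ?n) eX"
    using twist_mult[OF l(3) l(2) sign_fun_msign sign_fun_msign] twist_mult[OF l(1) l(1) pe1 sign_fun_msign] xuv
    unfolding eX_def by simp
  then have XM: "twist ?n (zeros ?n) eX \<in> Mlt_l ?n"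
    by (metis Mlt_l_mult_closed Ltr_basis_in_Mlt_l l)
  then obtain c where c: "\<And>i. length i = m \<Longrightarrow> eX (True#i) = c * eX (False#i)"
    and prod: "(\<Prod>i\<in>Words m. eX (False#i)) = 1"
    using Mlt_l_diag_cond[OF assms peX] unfolding diag_cond_def by blast
  have "msign u u = csign u"
    using msign_alternative[of u "zeros m"] k msign_zeros[of u m] by (simp add: u_def)
  then have "eX (False # zeros m) * eX (True # zeros m) = msign v w * msign w v"
    unfolding eX_def using k msign_zeros[of w m] msign_zeros[of u m]
    by (simp add: u_def v_def w_def mult_ac del: replicate_Suc)
  also have "\<dots> = -1" using msign_commutator[of v w] k by (simp add: v_def w_def)
  finally have "c = -1"
    using c[of "zeros m"] sign_funD[OF peX, of "False # zeros m"] by auto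
  then show ?thesis using that peX XM c prod by simp
qed

lemma diag_cond_in_Mlt_l:
  assumes "m \<ge> 2" "diag_cond m e"
  shows "twist (Suc m) (zeros (Suc m)) e \<in> Mlt_l (Suc m)"
proof -
  let ?n = "Suc m"
  obtain c where e: "sign_fun e" "is_sign c" "\<And>i. length i = m \<Longrightarrow> e (True#i) = c * e (False#i)"
    "(\<Prod>i\<in>Words m. e (False#i)) = 1"
    using assms(2) unfolding diag_cond_def by blast
  show ?thesis
  proof (cases "c = 1")
    case True
    then show ?thesis using diag_even_in_Mlt_l[OF e(1) _ e(4)] e(3) by simp
  next
    case False
    then have c: "c = -1" using e(2) by simp
    obtain eX where X: "sign_fun eX" "twist ?n (zeros ?n) eX \<in> Mlt_l ?n"
      "\<And>i. length i = m \<Longrightarrow> eX (True#i) = - eX (False#i)" "(\<Prod>i\<in>Words m. eX (False#i)) = 1"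
      using odd_diag_in_Mlt_l[OF assms(1)] by blast
    have pe: "sign_fun (\<lambda>j. eX j * e j)" using sign_fun_mult[OF X(1) e(1), of id] by simp
    have "twist ?n (zeros ?n) (\<lambda>j. eX j * e j) \<in> Mlt_l ?n"
      using X(3,4) e(3,4) c by (intro diag_even_in_Mlt_l[OF pe]) (simp_all add: prod.distrib)
    then have "twist ?n (zeros ?n) (\<lambda>j. eX j * e j) \<otimes>\<^bsub>BijGroup (Q ?n)\<^esub> twist ?n (zeros ?n) eX
        \<in> Mlt_l ?n"
      using X(2) Mlt_l_mult_closed by blast
    also have "twist ?n (zeros ?n) (\<lambda>j. eX j * e j) \<otimes>\<^bsub>BijGroup (Q ?n)\<^esub> twist ?n (zeros ?n) eX
        = twist ?n (zeros ?n) e"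
      unfolding diag_twist_mult[OF X(1) pe]
      by (rule twist_cong) (simp add: X(1) mult.assoc[symmetric])
    finally show ?thesis .
  qed
qed

lemma Diag_subset_Inn_l: assumes "m \<ge> 2" shows "Diag m \<subseteq> Inn_l (Suc m)"
proof
  fix d assume "d \<in> Diag m"
  then obtain e where d: "d = twist (Suc m) (zeros (Suc m)) e" "diag_cond m e" "e (zeros (Suc m)) = 1"
    unfolding Diag_def by blast
  then have "d \<in> Mlt_l (Suc m)" using diag_cond_in_Mlt_l[OF assms] by simp
  moreover have "d (cd_one (Suc m)) = cd_one (Suc m)"
    using twist_at_one[of "zeros (Suc m)" "Suc m" e] d(1,3) cd_one_basis by simp
  ultimately show "d \<in> Inn_l (Suc m)" unfolding Inn_l_def by blast
qed

lemma Inn_l_eq_Diag: "m \<ge> 2 \<Longrightarrow> Inn_l (Suc m) = Diag m"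
  using Inn_l_subset_Diag Diag_subset_Inn_l by blast

text \<open>Diag is an elementary abelian 2-group: diagonal twists multiply pointwise.\<close>

lemma Diag_mult_closed:
  assumes "d1 \<in> Diag m" "d2 \<in> Diag m" shows "d1 \<otimes>\<^bsub>BijGroup (Q (Suc m))\<^esub> d2 \<in> Diag m"
proof -
  obtain e1 c1 where d1: "d1 = twist (Suc m) (zeros (Suc m)) e1" "sign_fun e1" "is_sign c1"
    "\<And>i. length i = m \<Longrightarrow> e1 (True#i) = c1 * e1 (False#i)"
    "(\<Prod>i\<in>Words m. e1 (False#i)) = 1" "e1 (zeros (Suc m)) = 1"
    using assms(1) unfolding Diag_def diag_cond_def by blast
  obtain e2 c2 where d2: "d2 = twist (Suc m) (zeros (Suc m)) e2" "sign_fun e2" "is_sign c2"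
    "\<And>i. length i = m \<Longrightarrow> e2 (True#i) = c2 * e2 (False#i)"
    "(\<Prod>i\<in>Words m. e2 (False#i)) = 1" "e2 (zeros (Suc m)) = 1"
    using assms(2) unfolding Diag_def diag_cond_def by blast
  have "diag_cond m (\<lambda>j. e2 j * e1 j)"
    unfolding diag_cond_def
  proof (intro conjI exI[of _ "c1 * c2"])
    show "sign_fun (\<lambda>j. e2 j * e1 j)" using sign_fun_mult[OF d2(2) d1(2), of id] by simp
    show "is_sign (c1 * c2)" using d1(3) d2(3) by auto
    show "\<forall>i. length i = m \<longrightarrow> e2 (True#i) * e1 (True#i) = c1 * c2 * (e2 (False#i) * e1 (False#i))"
      using d1(4) d2(4) by (simp add: mult_ac)
    show "(\<Prod>i\<in>Words m. e2 (False#i) * e1 (False#i)) = 1"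
      using d1(5) d2(5) by (simp add: prod.distrib)
  qed
  moreover have "d1 \<otimes>\<^bsub>BijGroup (Q (Suc m))\<^esub> d2 = twist (Suc m) (zeros (Suc m)) (\<lambda>j. e2 j * e1 j)"
    unfolding d1(1) d2(1) by (rule diag_twist_mult[OF d2(2) d1(2)])
  ultimately show ?thesis using d1(6) d2(6) unfolding Diag_def by auto
qed

lemma Diag_elem: "d \<in> Diag m \<Longrightarrow> \<exists>e. d = twist (Suc m) (zeros (Suc m)) e \<and> sign_fun e"
  unfolding Diag_def diag_cond_def by blast

lemma Diag_sq: "d \<in> Diag m \<Longrightarrow> d \<otimes>\<^bsub>BijGroup (Q (Suc m))\<^esub> d = \<one>\<^bsub>BijGroup (Q (Suc m))\<^esub>"
proof -
  assume "d \<in> Diag m"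
  then obtain e where d: "d = twist (Suc m) (zeros (Suc m)) e" "sign_fun e" using Diag_elem by blast
  have "d \<otimes>\<^bsub>BijGroup (Q (Suc m))\<^esub> d = twist (Suc m) (zeros (Suc m)) (\<lambda>j. e j * e j)"
    unfolding d(1) by (rule diag_twist_mult[OF d(2) d(2)])
  also have "\<dots> = twist (Suc m) (zeros (Suc m)) (\<lambda>_. 1)" using d(2) by simp
  finally show ?thesis by (simp add: twist_id BijGroup_one del: replicate_Suc)
qed

lemma Diag_comm: "d1 \<in> Diag m \<Longrightarrow> d2 \<in> Diag m \<Longrightarrow>
   d1 \<otimes>\<^bsub>BijGroup (Q (Suc m))\<^esub> d2 = d2 \<otimes>\<^bsub>BijGroup (Q (Suc m))\<^esub> d1"
proof -
  assume "d1 \<in> Diag m" "d2 \<in> Diag m"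
  then obtain e1 e2 where d: "d1 = twist (Suc m) (zeros (Suc m)) e1" "sign_fun e1"
    "d2 = twist (Suc m) (zeros (Suc m)) e2" "sign_fun e2" using Diag_elem by metis
  show ?thesis unfolding d(1,3) diag_twist_mult[OF d(2) d(4)] diag_twist_mult[OF d(4) d(2)]
    by (simp add: mult.commute)
qed

lemma Diag_subgroup: "subgroup (Diag m) (BijGroup (Q (Suc m)))"
proof -
  have carrier: "Diag m \<subseteq> carrier (BijGroup (Q (Suc m)))"
    unfolding Diag_def diag_cond_def BijGroup_carrier using twist_Bij by auto
  show ?thesis
  proof (rule group.subgroupI[OF group_BijGroup carrier])
    have "diag_cond m (\<lambda>_. 1)"
      unfolding diag_cond_def sign_fun_def by (auto intro: exI[of _ 1])
    then show "Diag m \<noteq> {}" unfolding Diag_def by blast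
  next
    fix d assume d: "d \<in> Diag m"
    have "inv\<^bsub>BijGroup (Q (Suc m))\<^esub> d = d"
      by (rule group.inv_equality[OF group_BijGroup Diag_sq[OF d]]) (use carrier d in auto)
    then show "inv\<^bsub>BijGroup (Q (Suc m))\<^esub> d \<in> Diag m" using d by simp
  qed (rule Diag_mult_closed)
qed

lemma Diag_elementary_abelian: "elementary_abelian_2_subgroup (Diag m) (BijGroup (Q (Suc m)))"
  unfolding elementary_abelian_2_subgroup_def
  using Diag_subgroup Diag_comm Diag_sq by blast

text \<open>
  An element of Diag is determined by the constant c (a bit b) and the set A
  of words i \<noteq> 0 with e(0i) = -1, which must have even size; conversely each such pair
  (b, A) occurs.\<close>

definition diag_sign :: "bool \<Rightarrow> bool list set \<Rightarrow> bool list \<Rightarrow> int" where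
  "diag_sign b A j = flip A j * (if hd j \<and> b then -1 else 1)"

lemma sign_fun_diag_sign: "sign_fun (diag_sign b A)"
  unfolding sign_fun_def diag_sign_def flip_def by auto

definition Even_sets :: "nat \<Rightarrow> bool list set set" where
  "Even_sets m = {A. A \<subseteq> Words m - {zeros m} \<and> even (card A)}"

lemma diag_sign_in_Diag:
  assumes "A \<in> Even_sets m"
  shows "twist (Suc m) (zeros (Suc m)) (diag_sign b A) \<in> Diag m"
proof -
  have A: "A \<subseteq> Words m" "zeros m \<notin> A" "even (card A)" using assms unfolding Even_sets_def by auto
  have "(\<Prod>i\<in>Words m. diag_sign b A (False # i)) = (\<Prod>i\<in>Words m. (if i \<in> A then -1 else 1::int))"
    by (simp add: diag_sign_def flip_def)
  also have "\<dots> = 1" using A by (simp add: prod.If_cases Int_absorb1)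
  moreover have "\<forall>i. length i = m \<longrightarrow>
      diag_sign b A (True#i) = (if b then -1 else 1) * diag_sign b A (False#i)"
    by (simp add: diag_sign_def flip_def)
  ultimately have "diag_cond m (diag_sign b A)"
    unfolding diag_cond_def using sign_fun_diag_sign
    by (intro conjI exI[of _ "if b then -1 else 1"]) auto
  moreover have "diag_sign b A (zeros (Suc m)) = 1" using A by (simp add: diag_sign_def flip_def)
  ultimately show ?thesis unfolding Diag_def by blast
qed

lemma Diag_in_diag_sign:
  assumes "d \<in> Diag m"
  obtains b A where "A \<in> Even_sets m" "d = twist (Suc m) (zeros (Suc m)) (diag_sign b A)"
proof -
  obtain e c where d: "d = twist (Suc m) (zeros (Suc m)) e" "sign_fun e" "is_sign c"
    "\<And>i. length i = m \<Longrightarrow> e (True#i) = c * e (False#i)"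
    "(\<Prod>i\<in>Words m. e (False#i)) = 1" "e (zeros (Suc m)) = 1"
    using assms unfolding Diag_def diag_cond_def by blast
  define A where "A = {i \<in> Words m. e (False#i) = -1}"
  have "even (card A)"
    unfolding A_def using even_card_minus_ones[OF sign_funD[OF d(2)] finite_Words d(5)] .
  moreover have "A \<subseteq> Words m - {zeros m}" using d(6) unfolding A_def by auto
  ultimately have "A \<in> Even_sets m" unfolding Even_sets_def by simp
  moreover have "d = twist (Suc m) (zeros (Suc m)) (diag_sign (c = -1) A)"
    unfolding d(1)
  proof (rule twist_cong)
    fix j :: "bool list" assume "length j = Suc m"
    then obtain a i where ai: "j = a # i" "length i = m" by (cases j) auto
    have "flip A j = e (False#i)"
      using ai sign_funD[OF d(2), of "False#i"] unfolding flip_def A_def Words_def by auto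
    moreover have "(if c = -1 then -1 else 1) = c" using d(3) by auto
    ultimately show "e j = diag_sign (c = -1) A j"
      using ai d(4)[OF ai(2)] unfolding diag_sign_def by (cases a) simp_all
  qed
  ultimately show ?thesis using that by blast
qed

lemma Diag_param: "Diag m = (\<lambda>(b, A). twist (Suc m) (zeros (Suc m)) (diag_sign b A)) ` (UNIV \<times> Even_sets m)"
proof
  show "Diag m \<subseteq> (\<lambda>(b, A). twist (Suc m) (zeros (Suc m)) (diag_sign b A)) ` (UNIV \<times> Even_sets m)"
  proof
    fix d assume "d \<in> Diag m"
    then obtain b A where "A \<in> Even_sets m" "d = twist (Suc m) (zeros (Suc m)) (diag_sign b A)"
      by (rule Diag_in_diag_sign)
    then show "d \<in> (\<lambda>(b, A). twist (Suc m) (zeros (Suc m)) (diag_sign b A)) ` (UNIV \<times> Even_sets m)"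
      by force
  qed
qed (use diag_sign_in_Diag in auto)

lemma Diag_param_inj: "inj_on (\<lambda>(b, A). twist (Suc m) (zeros (Suc m)) (diag_sign b A)) (UNIV \<times> Even_sets m)"
proof (rule inj_onI, clarify)
  fix b A b' A' assume A: "A \<in> Even_sets m" and A': "A' \<in> Even_sets m"
    and eq: "twist (Suc m) (zeros (Suc m)) (diag_sign b A) = twist (Suc m) (zeros (Suc m)) (diag_sign b' A')"
  have g: "\<And>j. length j = Suc m \<Longrightarrow> diag_sign b A j = diag_sign b' A' j"
    using twist_inj[OF eq _ _ sign_fun_diag_sign sign_fun_diag_sign] by simp
  have "i \<in> A \<longleftrightarrow> i \<in> A'" for i
  proof (cases "length i = m")
    case True
    then show ?thesis using g[of "False # i"] by (auto simp: diag_sign_def flip_def split: if_splits)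
  next
    case False
    then show ?thesis using A A' unfolding Even_sets_def Words_def by auto
  qed
  then have AA: "A = A'" by blast
  have "zeros m \<notin> A" using A unfolding Even_sets_def by auto
  then have "b = b'" using g[of "True # zeros m"] AA by (auto simp: diag_sign_def flip_def split: if_splits)
  with AA show "b = b' \<and> A = A'" by simp
qed

lemma card_Even_sets: assumes "m \<ge> 1" shows "2 * card (Even_sets m) = 2 ^ (2 ^ m - 1)"
proof -
  let ?S = "Words m - {zeros m}"
  have fS: "finite ?S" by simp
  have cS: "card ?S = 2 ^ m - 1" using card_Words[of m] by (simp add: Words_def)
  have ne: "{} \<subset> ?S"
  proof -
    obtain k where k: "m = Suc k" using assms by (cases m) auto
    have "True # zeros k \<in> ?S" using k by (auto simp: Words_def)
    then show ?thesis by blast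
  qed
  let ?E = "{T. T \<subseteq> ?S \<and> even (card T)}" and ?O = "{T. T \<subseteq> ?S \<and> odd (card T)}"
  have eo: "card ?E = card ?O"
    using card_subsupersets_even_odd[OF fS ne] by simp
  have fin: "finite ?E" "finite ?O" using fS by (simp_all add: finite_subset[of _ "Pow ?S"])
  have "Pow ?S = ?E \<union> ?O" by auto
  then have "card (Pow ?S) = card ?E + card ?O"
    using card_Un_disjoint[OF fin] by auto
  then have "2 ^ card ?S = 2 * card ?E" using eo fS by (simp add: card_Pow)
  then show ?thesis unfolding Even_sets_def cS by simp
qed

lemma card_Diag: assumes "m \<ge> 1" shows "card (Diag m) = 2 ^ (2 ^ m - 1)"
proof -
  have "card (Diag m) = card ((UNIV::bool set) \<times> Even_sets m)"
    unfolding Diag_param by (rule card_image[OF Diag_param_inj])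
  also have "\<dots> = 2 * card (Even_sets m)" by (simp add: card_cartesian_product)
  finally show ?thesis using card_Even_sets[OF assms] by simp
qed

text \<open>
  Conjugation is an involutive anti-automorphism of Q_n, so conjugating
  by the permutation conj_map turns left translations into right translations.  The induced
  automorphism conj_aut of the symmetric group therefore maps Mlt_l onto Mlt_r and Inn_l
  onto Inn_r; it fixes every diagonal twist, whence Inn_r = Inn_l.\<close>

lemma cd_conj_conj_Q: "x \<in> Q n \<Longrightarrow> cd_conj (cd_conj x) = x"
proof -
  assume x: "x \<in> Q n"
  have p: "is_sign (sgn_of x * csign (idx x))"
    using Q_sign_idx[OF x] csign_is_sign is_sign_mult by blast
  have "cd_conj (cd_conj x) = signed (sgn_of x * csign (idx x) * csign (idx x)) (basis (idx x))"
    using cd_conj_Q[OF cd_conj_in_Q[OF x]] cd_conj_Q[OF x] p by simp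
  also have "\<dots> = signed (sgn_of x) (basis (idx x))" by (simp add: mult.assoc)
  also have "\<dots> = x" using Q_decomp[OF x] by (rule sym[OF conjunct1])
  finally show ?thesis .
qed

text \<open>Conjugation reverses products; in signs this is the commutator identity msign_swap.\<close>

lemma cd_conj_mult_Q:
  assumes a: "a \<in> Q n" and b: "b \<in> Q n"
  shows "cd_conj (cd_mult a b) = cd_mult (cd_conj b) (cd_conj a)"
proof -
  note A = Q_sign_idx[OF a] and B = Q_sign_idx[OF b]
  let ?i = "idx a" and ?j = "idx b"
  have ca: "sgn_of (cd_conj a) = sgn_of a * csign ?i" "idx (cd_conj a) = ?i"
    using cd_conj_Q[OF a] A csign_is_sign[of ?i] by auto
  have cb: "sgn_of (cd_conj b) = sgn_of b * csign ?j" "idx (cd_conj b) = ?j"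
    using cd_conj_Q[OF b] B csign_is_sign[of ?j] by auto
  have p: "is_sign (sgn_of a * sgn_of b * msign ?i ?j)" using A B msign_is_sign is_sign_mult by blast
  have "cd_conj (cd_mult a b)
      = signed (sgn_of a * sgn_of b * msign ?i ?j * csign (bxor ?i ?j)) (basis (bxor ?i ?j))"
    unfolding cd_mult_Q[OF a b] cd_conj_signed cd_conj_basis using p csign_is_sign
    by (simp add: signed_signed)
  also have "msign ?i ?j = csign ?i * csign ?j * csign (bxor ?i ?j) * msign ?j ?i"
    using msign_swap[of ?i ?j] A B by simp
  also have "signed (sgn_of a * sgn_of b * (csign ?i * csign ?j * csign (bxor ?i ?j) * msign ?j ?i)
        * csign (bxor ?i ?j)) (basis (bxor ?i ?j))
      = cd_mult (cd_conj b) (cd_conj a)"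
    unfolding cd_mult_Q[OF cd_conj_in_Q[OF b] cd_conj_in_Q[OF a]] ca cb
    by (simp add: bxor_comm mult_ac)
  finally show ?thesis .
qed

lemma Bij_in_Q: "f \<in> Bij (Q n) \<Longrightarrow> x \<in> Q n \<Longrightarrow> f x \<in> Q n"
  using Bij_imp_funcset by blast

definition conj_map :: "nat \<Rightarrow> cd \<Rightarrow> cd" where "conj_map n = (\<lambda>x\<in>Q n. cd_conj x)"

lemma conj_map_Bij: "conj_map n \<in> Bij (Q n)"
proof -
  have "bij_betw (conj_map n) (Q n) (Q n)"
    by (rule bij_betw_byWitness[where f'="conj_map n"])
       (auto simp: conj_map_def cd_conj_in_Q cd_conj_conj_Q)
  then show ?thesis unfolding Bij_def conj_map_def by simp
qed

lemma conj_map_involution: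
  "conj_map n \<otimes>\<^bsub>BijGroup (Q n)\<^esub> conj_map n = \<one>\<^bsub>BijGroup (Q n)\<^esub>"
  unfolding BijGroup_mult[OF conj_map_Bij conj_map_Bij] BijGroup_one
  by (rule ext) (simp add: compose_def conj_map_def cd_conj_in_Q cd_conj_conj_Q)

definition conj_aut :: "nat \<Rightarrow> (cd \<Rightarrow> cd) \<Rightarrow> (cd \<Rightarrow> cd)" where
  "conj_aut n f = conj_map n \<otimes>\<^bsub>BijGroup (Q n)\<^esub> f \<otimes>\<^bsub>BijGroup (Q n)\<^esub> conj_map n"

lemma conj_aut_apply:
  assumes "f \<in> Bij (Q n)" "x \<in> Q n" shows "conj_aut n f x = cd_conj (f (cd_conj x))"
proof -
  have "compose (Q n) (conj_map n) f \<in> Bij (Q n)" by (rule compose_Bij[OF conj_map_Bij assms(1)])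
  then have "conj_aut n f = compose (Q n) (compose (Q n) (conj_map n) f) (conj_map n)"
    unfolding conj_aut_def BijGroup_mult[OF conj_map_Bij assms(1)] by (simp add: BijGroup_mult conj_map_Bij)
  then show ?thesis
    using assms Bij_in_Q[OF assms(1) cd_conj_in_Q[OF assms(2)]]
    by (simp add: compose_def conj_map_def cd_conj_in_Q)
qed

lemma conj_aut_Bij: "f \<in> Bij (Q n) \<Longrightarrow> conj_aut n f \<in> Bij (Q n)"
  unfolding conj_aut_def by (simp add: BijGroup_mult compose_Bij conj_map_Bij)

lemma conj_aut_group_hom: "group_hom (BijGroup (Q n)) (BijGroup (Q n)) (conj_aut n)"
proof -
  interpret G: group "BijGroup (Q n)" by (rule group_BijGroup)
  let ?J = "conj_map n" and ?G = "BijGroup (Q n)"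
  have J: "?J \<in> carrier ?G" using conj_map_Bij by (simp add: BijGroup_carrier)
  have "conj_aut n (f \<otimes>\<^bsub>?G\<^esub> g) = conj_aut n f \<otimes>\<^bsub>?G\<^esub> conj_aut n g"
    if fg: "f \<in> carrier ?G" "g \<in> carrier ?G" for f g
  proof -
    have "conj_aut n f \<otimes>\<^bsub>?G\<^esub> conj_aut n g
        = ?J \<otimes>\<^bsub>?G\<^esub> (f \<otimes>\<^bsub>?G\<^esub> ((?J \<otimes>\<^bsub>?G\<^esub> ?J) \<otimes>\<^bsub>?G\<^esub> (g \<otimes>\<^bsub>?G\<^esub> ?J)))"
      unfolding conj_aut_def using fg J by (simp add: G.m_assoc)
    also have "\<dots> = conj_aut n (f \<otimes>\<^bsub>?G\<^esub> g)"
      unfolding conj_map_involution conj_aut_def using fg J by (simp add: G.m_assoc)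
    finally show ?thesis by simp
  qed
  then show ?thesis
    unfolding group_hom_def group_hom_axioms_def
    using group_BijGroup conj_aut_Bij by (auto intro!: homI simp: BijGroup_carrier)
qed

lemma conj_aut_Ltr: "x \<in> Q n \<Longrightarrow> conj_aut n (Ltr n (cd_conj x)) = Rtr n x"
proof -
  assume x: "x \<in> Q n"
  have L: "Ltr n (cd_conj x) \<in> Bij (Q n)"
    using Ltr_carrier[of n] cd_conj_in_Q[OF x] by (auto simp: BijGroup_carrier)
  show ?thesis
  proof (rule extensionalityI[of _ "Q n"])
    show "conj_aut n (Ltr n (cd_conj x)) \<in> extensional (Q n)"
      using conj_aut_Bij[OF L] Bij_imp_extensional by blast
    show "Rtr n x \<in> extensional (Q n)" unfolding Rtr_def by simp
    fix a assume a: "a \<in> Q n"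
    have "conj_aut n (Ltr n (cd_conj x)) a = cd_conj (cd_mult (cd_conj x) (cd_conj a))"
      using conj_aut_apply[OF L a] cd_conj_in_Q[OF a] by (simp add: Ltr_def)
    also have "\<dots> = cd_mult a x"
      using cd_conj_mult_Q[OF cd_conj_in_Q[OF x] cd_conj_in_Q[OF a]] cd_conj_conj_Q a x by simp
    finally show "conj_aut n (Ltr n (cd_conj x)) a = Rtr n x a" using a by (simp add: Rtr_def)
  qed
qed

lemma Mlt_r_conj_aut: "Mlt_r n = conj_aut n ` Mlt_l n"
proof -
  have "conj_aut n (Ltr n y) = Rtr n (cd_conj y)" if y: "y \<in> Q n" for y
    using conj_aut_Ltr[OF cd_conj_in_Q[OF y]] cd_conj_conj_Q[OF y] by simp
  then have "conj_aut n ` (Ltr n ` Q n) = Rtr n ` (cd_conj ` Q n)"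
    unfolding image_image by (rule image_cong[OF refl])
  also have "cd_conj ` Q n = Q n"
  proof
    show "cd_conj ` Q n \<subseteq> Q n" using cd_conj_in_Q by blast
    show "Q n \<subseteq> cd_conj ` Q n"
    proof
      fix x assume x: "x \<in> Q n"
      show "x \<in> cd_conj ` Q n"
      proof (rule image_eqI)
        show "x = cd_conj (cd_conj x)" using cd_conj_conj_Q[OF x] by simp
      qed (rule cd_conj_in_Q[OF x])
    qed
  qed
  finally show ?thesis
    unfolding Mlt_r_def Mlt_l_def
    using group_hom.generate_img[OF conj_aut_group_hom[of n] Ltr_carrier[of n]] by simp
qed

lemma Inn_r_conj_aut: "Inn_r n = conj_aut n ` Inn_l n"
proof -
  have "conj_aut n g (cd_one n) = cd_one n \<longleftrightarrow> g (cd_one n) = cd_one n" if g: "g \<in> Mlt_l n" for g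
  proof -
    have gB: "g \<in> Bij (Q n)"
      using g subgroup.subset[OF Mlt_l_subgroup] by (auto simp: BijGroup_carrier)
    have "conj_aut n g (cd_one n) = cd_conj (g (cd_one n))"
      using conj_aut_apply[OF gB cd_one_in_Q] cd_conj_one by simp
    then show ?thesis
      using cd_conj_conj_Q[OF Bij_in_Q[OF gB cd_one_in_Q]] cd_conj_one by metis
  qed
  then show ?thesis unfolding Inn_r_def Inn_l_def Mlt_r_conj_aut by auto
qed

text \<open>Both twisting by a sign and conjugation act on each basis element e_i by a sign, so
  they commute: conj_aut fixes diagonal twists.\<close>

lemma conj_aut_diag: assumes "sign_fun e" shows "conj_aut n (twist n (zeros n) e) = twist n (zeros n) e"
proof (rule extensionalityI[of _ "Q n"])
  have B: "twist n (zeros n) e \<in> Bij (Q n)" by (rule twist_Bij[OF _ assms]) simp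
  show "conj_aut n (twist n (zeros n) e) \<in> extensional (Q n)"
    using conj_aut_Bij[OF B] Bij_imp_extensional by blast
  show "twist n (zeros n) e \<in> extensional (Q n)" unfolding twist_def by simp
  fix x assume x: "x \<in> Q n"
  have c: "cd_conj x \<in> Q n" using cd_conj_in_Q[OF x] .
  have p1: "is_sign (sgn_of x * csign (idx x))"
    using Q_sign_idx[OF x] csign_is_sign is_sign_mult by blast
  have p2: "is_sign (sgn_of x * csign (idx x) * e (idx x))"
    using p1 sign_funD[OF assms] is_sign_mult by blast
  have sc: "sgn_of (cd_conj x) = sgn_of x * csign (idx x)" "idx (cd_conj x) = idx x"
    using cd_conj_Q[OF x] p1 by simp_all
  have "conj_aut n (twist n (zeros n) e) x = cd_conj (twist n (zeros n) e (cd_conj x))"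
    by (rule conj_aut_apply[OF B x])
  also have "\<dots> = signed (sgn_of x * csign (idx x) * e (idx x) * csign (idx x)) (basis (idx x))"
    unfolding twist_apply[OF c] sc using p1 p2 Q_sign_idx[OF x]
    by (simp add: cd_conj_signed cd_conj_basis signed_signed csign_is_sign)
  also have "\<dots> = twist n (zeros n) e x"
    using Q_sign_idx[OF x] by (simp add: twist_apply[OF x] mult_ac)
  finally show "conj_aut n (twist n (zeros n) e) x = twist n (zeros n) e x" .
qed

lemma Inn_r_eq_Inn_l: assumes "m \<ge> 2" shows "Inn_r (Suc m) = Inn_l (Suc m)"
proof -
  have "conj_aut (Suc m) d = d" if "d \<in> Diag m" for d
    using that conj_aut_diag unfolding Diag_def diag_cond_def by blast
  then have "conj_aut (Suc m) ` Diag m = Diag m" by force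
  then show ?thesis using Inn_r_conj_aut Inn_l_eq_Diag[OF assms] by simp
qed

theorem mainTheorem16:
  fixes n :: nat
  assumes "n \<ge> 3"
  shows "Inn_l n = Inn_r n
    \<and> elementary_abelian_2_subgroup (Inn_l n) (BijGroup (Q n))
    \<and> card (Inn_l n) = 2 ^ (2 ^ (n - 1) - 1)"
proof -
  define m where "m = n - 1"
  have n: "n = Suc m" and m: "m \<ge> 2" using assms unfolding m_def by auto
  have Inn_l: "Inn_l n = Diag m" using Inn_l_eq_Diag[OF m] n by simp
  show ?thesis
    unfolding Inn_l
    using Inn_r_eq_Inn_l[OF m] Inn_l_eq_Diag[OF m] Diag_elementary_abelian[of m] card_Diag[of m] m n
    by simp
qed

end
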